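(* Let $A$ be an associative algebra over a field $F$ with $\mathrm{char}(F)\neq 2,3$. If a linear map $T:A\to A$ satisfies $T(x)^3-x^3\in[A,A]$ for every $x\in A$, then $T(x)^2T(y)-x^2y\in[A,A]$ for all $x,y\in A$. Moreover, if $A$ is finite-dimensional and $\ker T\cap\mathrm{rad}(A)=\{0\}$, then $T$ is bijective and $T(M)\subseteq M$ for every maximal ideal $M$ of $A$.
   Context: $[A,A]$ denotes the linear span of all commutators $xy-yx$, $x,y\in A$. For finite-dimensional $A$, $\mathrm{rad}(A)$ is the radical of $A$, i.e. the unique maximal nilpotent ideal (equivalently, the intersection of all maximal ideals). *)

theory Defs
  imports Complex_Main
begin

definition algebra_over :: "('f::field \<Rightarrow> 'a::ring_1 \<Rightarrow> 'a) \<Rightarrow> bool" where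
  "algebra_over scale \<longleftrightarrow> Vector_Spaces.vector_space scale \<and>
     (\<forall>c x y. scale c (x * y) = scale c x * y \<and> scale c (x * y) = x * scale c y)"

definition comm_span :: "('f::field \<Rightarrow> 'a::ring_1 \<Rightarrow> 'a) \<Rightarrow> 'a set" where
  "comm_span scale = module.span scale {x * y - y * x | x y. True}"

definition fin_dim_alg :: "('f::field \<Rightarrow> 'a::ring_1 \<Rightarrow> 'a) \<Rightarrow> bool" where
  "fin_dim_alg scale \<longleftrightarrow> (\<exists>B. finite B \<and> module.span scale B = UNIV)"

definition alg_ideal :: "('f::field \<Rightarrow> 'a::ring_1 \<Rightarrow> 'a) \<Rightarrow> 'a set \<Rightarrow> bool" where
  "alg_ideal scale I \<longleftrightarrow> module.subspace scale I \<and>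
     (\<forall>a x. x \<in> I \<longrightarrow> a * x \<in> I \<and> x * a \<in> I)"

definition maximal_alg_ideal :: "('f::field \<Rightarrow> 'a::ring_1 \<Rightarrow> 'a) \<Rightarrow> 'a set \<Rightarrow> bool" where
  "maximal_alg_ideal scale M \<longleftrightarrow> alg_ideal scale M \<and> M \<noteq> UNIV \<and>
     (\<forall>J. alg_ideal scale J \<and> M \<subseteq> J \<longrightarrow> J = M \<or> J = UNIV)"

definition nilpotent_ideal :: "('f::field \<Rightarrow> 'a::ring_1 \<Rightarrow> 'a) \<Rightarrow> 'a set \<Rightarrow> bool" where
  "nilpotent_ideal scale I \<longleftrightarrow> alg_ideal scale I \<and>
     (\<exists>n>0. \<forall>xs. length xs = n \<and> set xs \<subseteq> I \<longrightarrow> prod_list xs = 0)"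

definition alg_rad :: "('f::field \<Rightarrow> 'a::ring_1 \<Rightarrow> 'a) \<Rightarrow> 'a set" where
  "alg_rad scale = (THE R. nilpotent_ideal scale R \<and>
     (\<forall>I. nilpotent_ideal scale I \<longrightarrow> I \<subseteq> R))"

end

theory Submission
  imports Defs "HOL-Library.Function_Algebras"
begin

text \<open>
  Polarizing the cube condition at \<open>x + y\<close>, \<open>x - y\<close> and \<open>y\<close> shows that
  \<open>6 (T(x)\<^sup>2 T(y) - x\<^sup>2 y)\<close> lies in \<open>[A,A]\<close>, and \<open>6\<close> is invertible. If \<open>T a = 0\<close>,
  then \<open>s\<^sup>2 a \<in> [A,A]\<close> for all \<open>s\<close>; linearizing \<open>s\<^sup>2\<close> and using \<open>(x a) y \<equiv> y (x a)\<close>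
  modulo \<open>[A,A]\<close> gives \<open>x a y \<in> [A,A]\<close> for all \<open>x, y\<close>.

  In finite dimension, \<open>rad(A)\<close> is the set of elements annihilating every simple
  subquotient \<open>X / Y\<close> of left ideals. On such a simple module \<open>V\<close>, choose a maximal
  subfield \<open>K\<close> of the division ring \<open>End\<^sub>A(V)\<close>. By the density theorem \<open>A \<otimes> K\<close> acts on
  \<open>V\<close> as all of \<open>End\<^sub>K(V)\<close>, so the \<open>K\<close>-trace of the action of \<open>A\<close>, followed by an
  \<open>F\<close>-linear functional on \<open>K\<close>, is a trace form on \<open>A\<close> that vanishes on \<open>[A,A]\<close> and
  on \<open>Ann(V)\<close> but not on \<open>A a A\<close> when \<open>a V \<noteq> 0\<close>. Hence \<open>ker T \<subseteq> rad(A)\<close>, so \<open>T\<close>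
  is injective and thus bijective. A maximal ideal \<open>M\<close> is the annihilator of \<open>A / N\<close>
  for a maximal left ideal \<open>N \<supseteq> M\<close>; for \<open>m \<in> M\<close>, surjectivity of \<open>T\<close> gives
  \<open>s\<^sup>2 T(m) \<in> [A,A] + M\<close> for all \<open>s\<close>, and the same argument shows \<open>T(m) \<in> M\<close>.
\<close>

lemma cube_polarization:
  fixes X Y :: "'a::ring_1"
  shows "(X + Y) ^ 3 - (X - Y) ^ 3 - 2 * Y ^ 3
    = 6 * (X\<^sup>2 * Y) + 2 * (X * Y * X - X * (X * Y)) + 2 * (Y * X\<^sup>2 - X\<^sup>2 * Y)"
proof -
  have six: "(6::'a) * z = 2 * z + 2 * z + 2 * z" for z
    by (simp flip: distrib_right)
  show ?thesis
    unfolding six by (simp add: power3_eq_cube power2_eq_square algebra_simps mult_2)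
qed

lemma sum_fun_apply: "(sum f A) x = sum (\<lambda>a. f a x) A"
  by (induct A rule: infinite_finite_induct) auto

definition commuting :: "('a \<Rightarrow> 'a) set \<Rightarrow> bool" where
  "commuting S \<longleftrightarrow> (\<forall>f\<in>S. \<forall>g\<in>S. f \<circ> g = g \<circ> f)"

lemma commuting_Union_chain:
  assumes "subset.chain A Ch" and "\<forall>S\<in>A. commuting S"
  shows "commuting (\<Union>Ch)"
  unfolding commuting_def
proof (intro ballI)
  fix f g assume "f \<in> \<Union>Ch" "g \<in> \<Union>Ch"
  then obtain S1 S2 where S: "S1 \<in> Ch" "S2 \<in> Ch" "f \<in> S1" "g \<in> S2"
    by blast
  have "S1 \<subseteq> S2 \<or> S2 \<subseteq> S1"
    using assms(1) S(1,2) unfolding subset.chain_def by blast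
  moreover have "commuting S1" "commuting S2"
    using assms S(1,2) unfolding subset.chain_def by auto
  ultimately show "f \<circ> g = g \<circ> f"
    using S(3,4) unfolding commuting_def by blast
qed

context vector_space begin

lemma nonzero_functional_ex:
  assumes "q \<noteq> 0"
  shows "\<exists>g. (\<forall>x y. g (x + y) = g x + g y) \<and> (\<forall>c x. g (scale c x) = c * g x) \<and> g q = 1"
proof -
  have q: "independent {q}"
    using assms by simp
  define B where "B = extend_basis {q}"
  have B: "independent B" "span B = UNIV" "q \<in> B"
    using extend_basis_superset[OF q] independent_extend_basis[OF q] span_extend_basis[OF q]
    unfolding B_def by auto
  show ?thesis
    using representation_add[OF B(1)] representation_scale[OF B(1)]
      representation_basis[OF B(1,3)] B(2)
    by (intro exI[of _ "\<lambda>x. representation B x q"]) simp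
qed

end

section \<open>Polarizing the cube condition\<close>

locale assoc_algebra =
  fixes scale :: "'f::field \<Rightarrow> 'a::ring_1 \<Rightarrow> 'a"
  assumes algebra: "algebra_over scale"
begin

sublocale vector_space scale
  using algebra unfolding algebra_over_def by auto

sublocale endo: vector_space_pair scale scale ..

abbreviation lin :: "('a \<Rightarrow> 'a) \<Rightarrow> bool" where
  "lin \<equiv> Vector_Spaces.linear scale scale"

lemma linI:
  assumes "\<And>x y. f (x + y) = f x + f y" and "\<And>c x. f (scale c x) = scale c (f x)"
  shows "lin f"
  using assms vector_space_axioms by (simp add: Vector_Spaces.linear_iff)

lemma scale_mult_left: "scale c x * y = scale c (x * y)"
  using algebra unfolding algebra_over_def by auto

lemma scale_mult_right: "x * scale c y = scale c (x * y)"
  using algebra unfolding algebra_over_def by metis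

lemma scale_of_nat: "scale (of_nat n) x = of_nat n * x"
  by (induct n) (simp_all add: scale_left_distrib distrib_right)

lemma scale_numeral: "scale (numeral n) x = numeral n * x"
  using scale_of_nat[of "numeral n" x] by simp

lemma subspace_numeral_mult: "subspace S \<Longrightarrow> z \<in> S \<Longrightarrow> numeral n * z \<in> S"
  by (metis scale_numeral subspace_scale)

lemma subspace_cancel_numeral:
  assumes "(numeral n :: 'f) \<noteq> 0" "subspace S" "numeral n * z \<in> S"
  shows "z \<in> S"
proof -
  have "z = scale (1 / numeral n) (numeral n * z)"
    using assms(1) by (simp flip: scale_numeral)
  with assms(2,3) show ?thesis by (metis subspace_scale)
qed

lemma subspace_comm_span: "subspace (comm_span scale)"
  unfolding comm_span_def by simp

lemma commutator_in_comm_span: "x * y - y * x \<in> comm_span scale"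
  unfolding comm_span_def by (rule span_base) blast

lemma polarized_cube_in_comm_span:
  assumes char2: "(2::'f) \<noteq> 0" and char3: "(3::'f) \<noteq> 0"
    and T: "lin T" and cube: "\<forall>x. T x ^ 3 - x ^ 3 \<in> comm_span scale"
  shows "(T x)\<^sup>2 * T y - x\<^sup>2 * y \<in> comm_span scale"
proof -
  note C = subspace_comm_span
  define twice_comms where "twice_comms X Y =
    2 * (X * Y * X - X * (X * Y)) + 2 * (Y * X\<^sup>2 - X\<^sup>2 * Y)" for X Y :: 'a
  have twice_comms_in: "twice_comms X Y \<in> comm_span scale" for X Y
    unfolding twice_comms_def
    by (intro subspace_add[OF C] subspace_numeral_mult[OF C] commutator_in_comm_span)
  have "6 * ((T x)\<^sup>2 * T y - x\<^sup>2 * y) =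
      ((T (x + y) ^ 3 - (x + y) ^ 3) - (T (x - y) ^ 3 - (x - y) ^ 3) - 2 * (T y ^ 3 - y ^ 3))
      - (twice_comms (T x) (T y) - twice_comms x y)"
    using cube_polarization[of "T x" "T y"] cube_polarization[of x y]
    by (simp add: endo.linear_add[OF T] endo.linear_diff[OF T] twice_comms_def
        algebra_simps)
  also have "\<dots> \<in> comm_span scale"
    using cube twice_comms_in by (meson C subspace_diff subspace_numeral_mult)
  finally have "6 * ((T x)\<^sup>2 * T y - x\<^sup>2 * y) \<in> comm_span scale" .
  moreover have "(6::'f) \<noteq> 0"
    using char2 char3 mult_eq_0_iff[of "2::'f" 3] by simp
  ultimately show ?thesis
    using subspace_cancel_numeral C by blast
qed

lemma sandwich_in_subspace:
  assumes S: "subspace S" "comm_span scale \<subseteq> S" and char2: "(2::'f) \<noteq> 0"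
    and squares: "\<forall>s. s\<^sup>2 * b \<in> S"
  shows "x * b * y \<in> S"
proof -
  have left: "z * b \<in> S" for z
  proof -
    have "2 * (z * b) = (z + 1)\<^sup>2 * b - z\<^sup>2 * b - 1\<^sup>2 * b"
      by (simp add: power2_eq_square algebra_simps mult_2)
    also have "\<dots> \<in> S" using squares subspace_diff[OF S(1)] by blast
    finally show ?thesis using subspace_cancel_numeral[OF char2 S(1)] by blast
  qed
  have "x * b * y = (x * b * y - y * (x * b)) + (y * x) * b"
    by (simp add: mult.assoc)
  also have "\<dots> \<in> S"
    using S commutator_in_comm_span left subspace_add by blast
  finally show ?thesis .
qed

end

section \<open>The radical as the common annihilator of simple subquotients\<close>

context assoc_algebra begin

definition left_ideal :: "'a set \<Rightarrow> bool" where
  "left_ideal X \<longleftrightarrow> subspace X \<and> (\<forall>a x. x \<in> X \<longrightarrow> a * x \<in> X)"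

definition simple_quotient :: "'a set \<Rightarrow> 'a set \<Rightarrow> bool" where
  "simple_quotient X Y \<longleftrightarrow> left_ideal X \<and> left_ideal Y \<and> Y \<subset> X \<and>
     (\<forall>Z. left_ideal Z \<and> Y \<subseteq> Z \<and> Z \<subseteq> X \<longrightarrow> Z = Y \<or> Z = X)"

definition annihilator :: "'a set \<Rightarrow> 'a set \<Rightarrow> 'a set" where
  "annihilator X Y = {a. \<forall>x\<in>X. a * x \<in> Y}"

definition Jrad :: "'a set" where
  "Jrad = \<Inter>{annihilator X Y | X Y. simple_quotient X Y}"

lemma left_ideal_subspace: "left_ideal X \<Longrightarrow> subspace X"
  by (simp add: left_ideal_def)

lemma left_ideal_mult: "left_ideal X \<Longrightarrow> x \<in> X \<Longrightarrow> a * x \<in> X"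
  by (simp add: left_ideal_def)

lemma left_ideal_UNIV: "left_ideal UNIV"
  by (simp add: left_ideal_def)

lemma left_ideal_zero: "left_ideal {0}"
  by (simp add: left_ideal_def)

lemma alg_ideal_imp_left_ideal: "alg_ideal scale I \<Longrightarrow> left_ideal I"
  by (simp add: alg_ideal_def left_ideal_def)

lemma alg_ideal_annihilator:
  assumes X: "left_ideal X" and Y: "left_ideal Y"
  shows "alg_ideal scale (annihilator X Y)"
  unfolding alg_ideal_def annihilator_def subspace_def
  using left_ideal_subspace[OF Y, THEN subspace_0] left_ideal_subspace[OF Y, THEN subspace_add]
    left_ideal_subspace[OF Y, THEN subspace_scale] left_ideal_mult[OF Y] left_ideal_mult[OF X]
  by (auto simp: distrib_right scale_mult_left mult.assoc)

lemma alg_ideal_Inter: "(\<And>I. I \<in> \<I> \<Longrightarrow> alg_ideal scale I) \<Longrightarrow> alg_ideal scale (\<Inter>\<I>)"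
  unfolding alg_ideal_def by (auto intro: subspace_Inter)

lemma alg_ideal_Jrad: "alg_ideal scale Jrad"
  unfolding Jrad_def
  by (rule alg_ideal_Inter) (use alg_ideal_annihilator simple_quotient_def in blast)

lemma finite_dimensional_vector_space_ex:
  assumes "fin_dim_alg scale"
  shows "\<exists>B. finite_dimensional_vector_space scale B"
proof -
  obtain B0 where B0: "finite B0" "span B0 = UNIV"
    using assms unfolding fin_dim_alg_def by blast
  obtain B where B: "B \<subseteq> B0" "independent B" "B0 \<subseteq> span B"
    using maximal_independent_subset[of B0] by blast
  have "span B = UNIV"
    using B(3) B0(2) by (metis span_mono span_span top.extremum_uniqueI)
  then have "finite_dimensional_vector_space scale B"
    using B(1,2) B0(1) finite_subset by unfold_locales auto
  then show ?thesis ..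
qed

lemma left_ideal_dim_less:
  assumes fin: "fin_dim_alg scale" and "left_ideal X" "left_ideal Y" "Y \<subset> X"
  shows "dim Y < dim X"
proof -
  obtain B where "finite_dimensional_vector_space scale B"
    using finite_dimensional_vector_space_ex[OF fin] ..
  then interpret fd: finite_dimensional_vector_space scale B .
  show ?thesis
    using assms(2-4) fd.dim_psubset[of Y X] by (metis left_ideal_subspace span_eq_iff)
qed

lemma simple_quotient_between:
  assumes fin: "fin_dim_alg scale"
    and X: "left_ideal X" and Y: "left_ideal Y" "Y \<subset> X"
  shows "\<exists>Z. Y \<subseteq> Z \<and> simple_quotient X Z"
proof -
  let ?Q = "\<lambda>m. \<exists>Z. left_ideal Z \<and> Y \<subseteq> Z \<and> Z \<subset> X \<and> dim Z = m"
  have "?Q (dim Y)"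
    using Y by blast
  moreover have "\<forall>m. ?Q m \<longrightarrow> m \<le> dim X"
    using left_ideal_dim_less[OF fin X] less_imp_le by blast
  ultimately obtain m where "?Q m" and m_max: "\<forall>k. ?Q k \<longrightarrow> k \<le> m"
    by (rule Nat.ex_has_greatest_nat[elim_format]) blast
  then obtain Z where Z: "left_ideal Z" "Y \<subseteq> Z" "Z \<subset> X" "dim Z = m"
    by blast
  have "simple_quotient X Z"
    unfolding simple_quotient_def
  proof (intro conjI allI impI X Z(1,3))
    fix Z' assume Z': "left_ideal Z' \<and> Z \<subseteq> Z' \<and> Z' \<subseteq> X"
    show "Z' = Z \<or> Z' = X"
    proof (rule ccontr)
      assume "\<not> (Z' = Z \<or> Z' = X)"
      then have "Z \<subset> Z'" "Y \<subseteq> Z'" "Z' \<subset> X"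
        using Z Z' by auto
      then have "dim Z < dim Z'" "dim Z' \<le> m"
        using left_ideal_dim_less[OF fin] Z(1) Z' m_max by blast+
      then show False
        using Z(4) by simp
    qed
  qed
  with Z(2) show ?thesis by blast
qed

lemma Jrad_product_annihilates:
  assumes fin: "fin_dim_alg scale"
  shows "set xs \<subseteq> Jrad \<Longrightarrow> left_ideal X \<Longrightarrow> dim X \<le> length xs \<Longrightarrow> x \<in> X
    \<Longrightarrow> prod_list xs * x = 0"
proof (induction xs arbitrary: X x rule: rev_induct)
  case Nil
  have "\<not> {0} \<subset> X"
    using left_ideal_dim_less[OF fin Nil.prems(2) left_ideal_zero] Nil.prems(3) by auto
  then show ?case
    using Nil.prems(2,4) left_ideal_subspace subspace_0 by fastforce
next
  case (snoc z zs)
  show ?case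
  proof (cases "X = {0}")
    case True
    with snoc.prems show ?thesis by simp
  next
    case False
    have "{0} \<subset> X"
      using False snoc.prems(2) left_ideal_subspace subspace_0 by blast
    then obtain Y where Y: "simple_quotient X Y"
      using simple_quotient_between[OF fin snoc.prems(2) left_ideal_zero] by blast
    then have "z * x \<in> Y"
      using snoc.prems(1,4) unfolding Jrad_def annihilator_def by auto
    moreover have "dim Y < dim X"
      using Y left_ideal_dim_less[OF fin] unfolding simple_quotient_def by blast
    ultimately have "prod_list zs * (z * x) = 0"
      using snoc.IH[of Y "z * x"] snoc.prems Y unfolding simple_quotient_def by simp
    then show ?thesis
      by (simp add: mult.assoc)
  qed
qed

lemma Jrad_nilpotent:
  assumes fin: "fin_dim_alg scale"
  shows "nilpotent_ideal scale Jrad"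
proof -
  have "(1::'a) \<notin> {0}"
    by simp
  then have "{0::'a} \<subset> UNIV"
    by blast
  then have "0 < dim (UNIV :: 'a set)"
    using left_ideal_dim_less[OF fin left_ideal_UNIV left_ideal_zero] by simp
  moreover have "prod_list xs = 0" if "length xs = dim (UNIV :: 'a set)" "set xs \<subseteq> Jrad" for xs
    using Jrad_product_annihilates[OF fin that(2) left_ideal_UNIV, of 1] that(1) by simp
  ultimately show ?thesis
    unfolding nilpotent_ideal_def using alg_ideal_Jrad by blast
qed

lemma left_ideal_annihilated_part:
  assumes X: "left_ideal X" and Y: "left_ideal Y" and I: "alg_ideal scale I"
  shows "left_ideal {x \<in> X. \<forall>j\<in>I. j * x \<in> Y}"
proof -
  have sX: "subspace X" and sY: "subspace Y"
    using X Y by (simp_all add: left_ideal_subspace)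
  have I_right: "j * a \<in> I" if "j \<in> I" for j a
    using I that unfolding alg_ideal_def by blast
  show ?thesis
    unfolding left_ideal_def subspace_def
  proof (intro conjI allI impI ballI)
    show "0 \<in> {x \<in> X. \<forall>j\<in>I. j * x \<in> Y}"
      using sX sY by (simp add: subspace_0)
  next
    fix x y assume "x \<in> {x \<in> X. \<forall>j\<in>I. j * x \<in> Y}" "y \<in> {x \<in> X. \<forall>j\<in>I. j * x \<in> Y}"
    then show "x + y \<in> {x \<in> X. \<forall>j\<in>I. j * x \<in> Y}"
      using sX sY by (simp add: distrib_left subspace_add)
  next
    fix c x assume "x \<in> {x \<in> X. \<forall>j\<in>I. j * x \<in> Y}"
    then show "scale c x \<in> {x \<in> X. \<forall>j\<in>I. j * x \<in> Y}"
      using sX sY by (simp add: scale_mult_right subspace_scale)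
  next
    fix a x assume "x \<in> {x \<in> X. \<forall>j\<in>I. j * x \<in> Y}"
    then show "a * x \<in> {x \<in> X. \<forall>j\<in>I. j * x \<in> Y}"
      using left_ideal_mult[OF X] I_right by (simp flip: mult.assoc)
  qed
qed

lemma products_escaping_subideal:
  assumes X: "left_ideal X" and x0: "x0 \<in> X - Y"
    and escape: "\<And>x. x \<in> X - Y \<Longrightarrow> \<exists>j\<in>I. j * x \<notin> Y"
  shows "\<exists>xs. length xs = k \<and> set xs \<subseteq> I \<and> prod_list xs * x0 \<in> X - Y"
proof (induction k)
  case 0
  show ?case
    using x0 by (intro exI[of _ "[]"]) auto
next
  case (Suc k)
  then obtain xs where xs: "length xs = k" "set xs \<subseteq> I" "prod_list xs * x0 \<in> X - Y"
    by blast
  then obtain j where "j \<in> I" "j * (prod_list xs * x0) \<notin> Y"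
    using escape by blast
  with xs left_ideal_mult[OF X] show ?case
    by (intro exI[of _ "j # xs"]) (auto simp: mult.assoc)
qed

lemma nilpotent_ideal_annihilates_simple_quotient:
  assumes I: "nilpotent_ideal scale I" and XY: "simple_quotient X Y"
  shows "I \<subseteq> annihilator X Y"
proof -
  obtain n where n: "\<forall>xs. length xs = n \<and> set xs \<subseteq> I \<longrightarrow> prod_list xs = 0"
    using I unfolding nilpotent_ideal_def by blast
  have X: "left_ideal X" and Y: "left_ideal Y" "Y \<subset> X"
    and between: "\<And>Z. left_ideal Z \<Longrightarrow> Y \<subseteq> Z \<Longrightarrow> Z \<subseteq> X \<Longrightarrow> Z = Y \<or> Z = X"
    using XY unfolding simple_quotient_def by blast+
  define Z where "Z = {x \<in> X. \<forall>j\<in>I. j * x \<in> Y}"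
  have "left_ideal Z"
    unfolding Z_def
    using left_ideal_annihilated_part X Y(1) I unfolding nilpotent_ideal_def by blast
  moreover have "Y \<subseteq> Z" "Z \<subseteq> X"
    unfolding Z_def using Y left_ideal_mult[OF Y(1)] by auto
  ultimately have "Z = Y \<or> Z = X"
    using between by blast
  moreover have "Z \<noteq> Y"
  proof
    assume "Z = Y"
    obtain x0 where "x0 \<in> X - Y"
      using Y(2) by blast
    with \<open>Z = Y\<close> obtain xs where "length xs = n" "set xs \<subseteq> I" "prod_list xs * x0 \<in> X - Y"
      using products_escaping_subideal[OF X, of x0 Y I n] unfolding Z_def by blast
    then have "0 \<notin> Y"
      using n by simp
    then show False
      using Y(1) left_ideal_subspace subspace_0 by blast
  qed
  ultimately show ?thesis
    unfolding Z_def annihilator_def by blast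
qed

lemma nilpotent_ideal_subset_Jrad: "nilpotent_ideal scale I \<Longrightarrow> I \<subseteq> Jrad"
  unfolding Jrad_def using nilpotent_ideal_annihilates_simple_quotient by blast

lemma alg_rad_eq_Jrad:
  assumes "fin_dim_alg scale"
  shows "alg_rad scale = Jrad"
  unfolding alg_rad_def
  using Jrad_nilpotent[OF assms] nilpotent_ideal_subset_Jrad by (intro the_equality) auto

end

section \<open>Irreducible representations and their trace form\<close>

context assoc_algebra begin

definition trace_form :: "('a \<Rightarrow> 'f) \<Rightarrow> bool" where
  "trace_form \<theta> \<longleftrightarrow> (\<forall>x y. \<theta> (x + y) = \<theta> x + \<theta> y) \<and> (\<forall>c x. \<theta> (scale c x) = c * \<theta> x) \<and>
     (\<forall>x y. \<theta> (x * y) = \<theta> (y * x))"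

lemma trace_form_comm_span:
  assumes \<theta>: "trace_form \<theta>" and z: "z \<in> comm_span scale"
  shows "\<theta> z = 0"
proof -
  have "\<theta> 0 = 0"
    using \<theta> unfolding trace_form_def by (metis add_cancel_right_right add_0)
  then have "subspace {z. \<theta> z = 0}"
    using \<theta> unfolding trace_form_def subspace_def by simp
  moreover have "{x * y - y * x | x y. True} \<subseteq> {z. \<theta> z = 0}"
  proof clarify
    fix x y
    have "\<theta> (x * y - y * x) + \<theta> (y * x) = \<theta> (x * y)"
      using \<theta> unfolding trace_form_def by (metis diff_add_cancel)
    then show "\<theta> (x * y - y * x) = 0"
      using \<theta> unfolding trace_form_def by simp
  qed
  ultimately have "comm_span scale \<subseteq> {z. \<theta> z = 0}"
    unfolding comm_span_def by (intro span_minimal)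
  with z show ?thesis
    by blast
qed

end

text \<open>
  A simple left \<open>A\<close>-module, realised inside \<open>A\<close> as the image \<open>W\<close> of a linear
  projection \<open>P\<close>: \<open>A\<close> acts on \<open>W\<close> by \<open>a \<cdot> w = P (a * w)\<close>.
\<close>

locale irreducible_rep = assoc_algebra scale for scale :: "'f::field \<Rightarrow> 'a::ring_1 \<Rightarrow> 'a" +
  fixes P :: "'a \<Rightarrow> 'a" and W :: "'a set"
  assumes linear_P: "Vector_Spaces.linear scale scale P"
    and P_in_W: "P x \<in> W"
    and P_id: "w \<in> W \<Longrightarrow> P w = w"
    and P_action: "w \<in> W \<Longrightarrow> P (a * P (b * w)) = P (a * b * w)"
    and P_transitive: "u \<in> W \<Longrightarrow> u \<noteq> 0 \<Longrightarrow> w \<in> W \<Longrightarrow> \<exists>a. P (a * u) = w"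
    and W_nonzero: "W \<noteq> {0}"
    and fin: "fin_dim_alg scale"
begin

lemma P_add: "P (x + y) = P x + P y"
  using endo.linear_add[OF linear_P] .

lemma P_scale: "P (scale c x) = scale c (P x)"
  using endo.linear_scale[OF linear_P] .

lemma P_0: "P 0 = 0"
  using endo.linear_0[OF linear_P] .

lemma P_P: "P (P x) = P x"
  using P_id[OF P_in_W] .

lemma subspace_W: "subspace W"
proof -
  have "W = range P"
    using P_in_W P_id by (metis image_eqI image_subsetI subsetI subset_antisym UNIV_I)
  then show ?thesis
    using endo.linear_subspace_image[OF linear_P subspace_UNIV] by simp
qed

lemma W_ex: "\<exists>w\<in>W. w \<noteq> 0"
  using W_nonzero subspace_0[OF subspace_W] by blast

lemma P_nonzero: "P \<noteq> 0"
  using W_ex P_id by fastforce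

text \<open>
  \<open>A\<close>-module endomorphisms of \<open>W\<close>, extended to \<open>A\<close> by precomposing with \<open>P\<close>;
  by Schur's lemma they form a division ring.
\<close>

definition module_endo :: "('a \<Rightarrow> 'a) set" where
  "module_endo = {f. lin f \<and> (\<forall>x. f x = f (P x)) \<and> (\<forall>x. f x \<in> W) \<and>
      (\<forall>a. \<forall>w\<in>W. f (P (a * w)) = P (a * f w))}"

lemma module_endoD:
  assumes "f \<in> module_endo"
  shows "lin f" "f x = f (P x)" "f x \<in> W" "w \<in> W \<Longrightarrow> f (P (a * w)) = P (a * f w)"
  using assms unfolding module_endo_def by auto

lemma P_module_endo: "P \<in> module_endo"
  unfolding module_endo_def using linear_P P_P P_in_W P_id by auto

lemma module_endo_add: "f \<in> module_endo \<Longrightarrow> g \<in> module_endo \<Longrightarrow> f + g \<in> module_endo"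
  unfolding module_endo_def plus_fun_def
  by (auto simp: endo.module_hom_add subspace_add[OF subspace_W] distrib_left P_add)

lemma module_endo_comp: "f \<in> module_endo \<Longrightarrow> g \<in> module_endo \<Longrightarrow> f \<circ> g \<in> module_endo"
  unfolding module_endo_def by (auto simp: Vector_Spaces.linear_compose)

lemma module_endo_scale: "f \<in> module_endo \<Longrightarrow> (\<lambda>x. scale c (f x)) \<in> module_endo"
  unfolding module_endo_def
  by (auto simp: endo.module_hom_scale subspace_scale[OF subspace_W] scale_mult_right P_scale)

lemma module_endo_neg: "f \<in> module_endo \<Longrightarrow> - f \<in> module_endo"
  unfolding module_endo_def fun_Compl_def
  by (auto simp: endo.module_hom_neg subspace_neg[OF subspace_W] endo.linear_neg[OF linear_P])

lemma module_endo_zero: "0 \<in> module_endo"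
  unfolding module_endo_def zero_fun_def
  by (auto simp: endo.module_hom_zero subspace_0[OF subspace_W] P_0)

lemma module_endo_eq_0_iff: "f \<in> module_endo \<Longrightarrow> f = 0 \<longleftrightarrow> (\<forall>w\<in>W. f w = 0)"
  by (auto simp: fun_eq_iff) (metis module_endoD(2) P_in_W)

lemma module_endo_inj:
  assumes f: "f \<in> module_endo" "f \<noteq> 0" and w: "w \<in> W" "f w = 0"
  shows "w = 0"
proof (rule ccontr)
  assume "w \<noteq> 0"
  have "f w' = 0" if w': "w' \<in> W" for w'
  proof -
    obtain a where "P (a * w) = w'"
      using P_transitive[OF w(1) \<open>w \<noteq> 0\<close> w'] by blast
    then have "f w' = P (a * f w)"
      by (metis module_endoD(4)[OF f(1) w(1)])
    then show "f w' = 0"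
      using w(2) P_0 by simp
  qed
  with f module_endo_eq_0_iff show False
    by blast
qed

lemma module_endo_surj:
  assumes f: "f \<in> module_endo" "f \<noteq> 0" and u: "u \<in> W"
  shows "\<exists>w\<in>W. f w = u"
proof -
  obtain w0 where w0: "w0 \<in> W" "f w0 \<noteq> 0"
    using f module_endo_eq_0_iff by blast
  obtain a where "P (a * f w0) = u"
    using P_transitive[OF module_endoD(3)[OF f(1)] w0(2) u] by blast
  then have "f (P (a * w0)) = u"
    using module_endoD(4)[OF f(1) w0(1)] by simp
  then show ?thesis
    using P_in_W by blast
qed

definition endo_inv :: "('a \<Rightarrow> 'a) \<Rightarrow> 'a \<Rightarrow> 'a" where
  "endo_inv f x = (THE w. w \<in> W \<and> f w = P x)"

lemma endo_inv:
  assumes f: "f \<in> module_endo" "f \<noteq> 0"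
  shows "endo_inv f x \<in> W \<and> f (endo_inv f x) = P x"
    and "w \<in> W \<Longrightarrow> f w = P x \<Longrightarrow> endo_inv f x = w"
proof -
  have unique: "w1 = w2" if "w1 \<in> W" "w2 \<in> W" "f w1 = f w2" for w1 w2
    using module_endo_inj[OF f, of "w1 - w2"] that subspace_diff[OF subspace_W]
      endo.linear_diff[OF module_endoD(1)[OF f(1)]] by simp
  obtain w0 where "w0 \<in> W" "f w0 = P x"
    using module_endo_surj[OF f P_in_W] by blast
  with unique have ex1: "\<exists>!w. w \<in> W \<and> f w = P x"
    by metis
  then show "endo_inv f x \<in> W \<and> f (endo_inv f x) = P x"
    unfolding endo_inv_def by (rule theI')
  show "w \<in> W \<Longrightarrow> f w = P x \<Longrightarrow> endo_inv f x = w"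
    using ex1 unfolding endo_inv_def by (rule the1_equality) auto
qed

lemma endo_inv_module_endo:
  assumes f: "f \<in> module_endo" "f \<noteq> 0"
  shows "endo_inv f \<in> module_endo"
proof -
  note inv = endo_inv[OF f]
  have lin_f: "lin f"
    using module_endoD(1)[OF f(1)] .
  have "lin (endo_inv f)"
  proof (rule linI)
    show "endo_inv f (x + y) = endo_inv f x + endo_inv f y" for x y
      by (rule inv(2))
        (auto simp: subspace_add[OF subspace_W] inv(1) endo.linear_add[OF lin_f] P_add)
    show "endo_inv f (scale c x) = scale c (endo_inv f x)" for c x
      by (rule inv(2))
        (auto simp: subspace_scale[OF subspace_W] inv(1) endo.linear_scale[OF lin_f] P_scale)
  qed
  moreover have "endo_inv f x = endo_inv f (P x)" for x
    by (rule inv(2)) (auto simp: inv(1) P_P)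
  moreover have "endo_inv f (P (a * w)) = P (a * endo_inv f w)" if "w \<in> W" for a w
    by (rule inv(2))
      (auto simp: P_in_W module_endoD(4)[OF f(1) inv(1)[THEN conjunct1]] inv(1) P_P P_id[OF that])
  ultimately show ?thesis
    unfolding module_endo_def using inv(1) by blast
qed

lemma maximal_commuting_ex:
  "\<exists>S. S \<subseteq> module_endo \<and> commuting S \<and>
     (\<forall>f\<in>module_endo. (\<forall>g\<in>S. f \<circ> g = g \<circ> f) \<longrightarrow> f \<in> S)"
proof -
  let ?A = "{S. S \<subseteq> module_endo \<and> commuting S}"
  have "\<exists>M\<in>?A. \<forall>X\<in>?A. M \<subseteq> X \<longrightarrow> X = M"
  proof (rule subset_Zorn')
    fix Ch assume Ch: "subset.chain ?A Ch"
    then have "commuting (\<Union>Ch)"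
      by (rule commuting_Union_chain) simp
    moreover have "\<Union>Ch \<subseteq> module_endo"
      using Ch unfolding subset.chain_def by blast
    ultimately show "\<Union>Ch \<in> ?A"
      by blast
  qed
  then obtain M where "M \<in> ?A" and M_max: "\<forall>X\<in>?A. M \<subseteq> X \<longrightarrow> X = M"
    by (rule bexE)
  then have M: "M \<subseteq> module_endo" "commuting M"
    by simp_all
  have "f \<in> M" if "f \<in> module_endo" "\<forall>g\<in>M. f \<circ> g = g \<circ> f" for f
  proof -
    have "commuting (insert f M)"
      using M(2) that(2) unfolding commuting_def by (simp add: Ball_def)
    then have "insert f M \<in> ?A"
      using M(1) that(1) by simp
    with M_max show "f \<in> M"
      by blast
  qed
  with M show ?thesis
    by blast
qed

text \<open>
  A maximal commutative subring of the division ring \<open>module_endo\<close>, hence a field;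
  \<open>W\<close> is a vector space over \<open>K\<close> on which \<open>A\<close> acts \<open>K\<close>-linearly.
\<close>

definition K :: "('a \<Rightarrow> 'a) set" where
  "K = (SOME S. S \<subseteq> module_endo \<and> commuting S \<and>
     (\<forall>f\<in>module_endo. (\<forall>g\<in>S. f \<circ> g = g \<circ> f) \<longrightarrow> f \<in> S))"

lemma K_subset: "K \<subseteq> module_endo"
  and K_commuting: "commuting K"
  and K_maximal: "f \<in> module_endo \<Longrightarrow> (\<And>g. g \<in> K \<Longrightarrow> f \<circ> g = g \<circ> f) \<Longrightarrow> f \<in> K"
  using someI_ex[OF maximal_commuting_ex] unfolding K_def[symmetric] by blast+

lemma K_module_endo: "l \<in> K \<Longrightarrow> l \<in> module_endo"
  using K_subset by auto

lemma K_commute: "l \<in> K \<Longrightarrow> m \<in> K \<Longrightarrow> l (m x) = m (l x)"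
  using K_commuting unfolding commuting_def by (metis comp_apply)

lemma K_comp_commute: "l \<in> K \<Longrightarrow> m \<in> K \<Longrightarrow> l \<circ> m = m \<circ> l"
  by (auto simp: fun_eq_iff K_commute)

lemma K_linear: "l \<in> K \<Longrightarrow> lin l"
  using K_module_endo module_endoD by blast

lemma K_in_W: "l \<in> K \<Longrightarrow> l x \<in> W"
  using K_module_endo module_endoD by blast

lemma K_P: "l \<in> K \<Longrightarrow> l (P x) = l x"
  using K_module_endo module_endoD by metis

lemma K_action: "l \<in> K \<Longrightarrow> w \<in> W \<Longrightarrow> l (P (a * w)) = P (a * l w)"
  using K_module_endo module_endoD by blast

lemma K_memI: "f \<in> module_endo \<Longrightarrow> (\<And>g x. g \<in> K \<Longrightarrow> f (g x) = g (f x)) \<Longrightarrow> f \<in> K"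
  using K_maximal by (metis comp_apply ext)

lemma P_in_K: "P \<in> K"
  by (rule K_memI[OF P_module_endo]) (simp add: P_id K_in_W K_P)

lemma K_add: "l \<in> K \<Longrightarrow> m \<in> K \<Longrightarrow> l + m \<in> K"
  by (rule K_memI)
    (auto simp: module_endo_add K_module_endo K_commute endo.linear_add[OF K_linear])

lemma K_comp: "l \<in> K \<Longrightarrow> m \<in> K \<Longrightarrow> l \<circ> m \<in> K"
  by (rule K_memI) (auto simp: module_endo_comp K_module_endo K_commute)

lemma K_scale: "l \<in> K \<Longrightarrow> (\<lambda>x. scale c (l x)) \<in> K"
  by (rule K_memI)
    (auto simp: module_endo_scale K_module_endo K_commute endo.linear_scale[OF K_linear])

lemma K_neg: "l \<in> K \<Longrightarrow> - l \<in> K"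
  by (rule K_memI)
    (auto simp: module_endo_neg K_module_endo K_commute endo.linear_neg[OF K_linear])

lemma K_zero: "0 \<in> K"
  by (rule K_memI) (auto simp: module_endo_zero endo.linear_0[OF K_linear])

lemma K_diff: "l \<in> K \<Longrightarrow> m \<in> K \<Longrightarrow> l - m \<in> K"
  using K_add K_neg by (metis diff_conv_add_uminus)

lemma K_sum: "(\<And>i. i \<in> I \<Longrightarrow> f i \<in> K) \<Longrightarrow> sum f I \<in> K"
  by (induct I rule: infinite_finite_induct) (auto simp: K_zero K_add)

lemma K_inverse:
  assumes l: "l \<in> K" "l \<noteq> 0"
  shows "endo_inv l \<in> K" "endo_inv l (l x) = P x"
proof -
  have l_endo: "l \<in> module_endo"
    using K_module_endo[OF l(1)] .
  note inv = endo_inv[OF l_endo l(2)]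
  show "endo_inv l (l x) = P x"
    by (rule inv(2)) (auto simp: P_in_W module_endoD(2)[OF l_endo, symmetric] P_id
        module_endoD(3)[OF l_endo])
  show "endo_inv l \<in> K"
  proof (rule K_memI[OF endo_inv_module_endo[OF l_endo l(2)]])
    fix g x assume g: "g \<in> K"
    show "endo_inv l (g x) = g (endo_inv l x)"
      by (rule inv(2)) (auto simp: K_in_W[OF g] K_commute[OF l(1) g] inv(1) K_P[OF g] P_id)
  qed
qed

definition kcomb :: "nat \<Rightarrow> (nat \<Rightarrow> 'a \<Rightarrow> 'a) \<Rightarrow> (nat \<Rightarrow> 'a) \<Rightarrow> 'a" where
  "kcomb n ls b = (\<Sum>i<n. ls i (b i))"

definition K_independent :: "nat \<Rightarrow> (nat \<Rightarrow> 'a) \<Rightarrow> bool" where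
  "K_independent n b \<longleftrightarrow> (\<forall>i<n. b i \<in> W) \<and>
     (\<forall>ls. (\<forall>i<n. ls i \<in> K) \<longrightarrow> kcomb n ls b = 0 \<longrightarrow> (\<forall>i<n. ls i = 0))"

definition in_K_span :: "nat \<Rightarrow> (nat \<Rightarrow> 'a) \<Rightarrow> 'a \<Rightarrow> bool" where
  "in_K_span n b w \<longleftrightarrow> (\<exists>ls. (\<forall>i<n. ls i \<in> K) \<and> w = kcomb n ls b)"

lemma kcomb_in_W: "(\<And>i. i < n \<Longrightarrow> ls i \<in> K) \<Longrightarrow> kcomb n ls b \<in> W"
  unfolding kcomb_def by (rule subspace_sum[OF subspace_W]) (auto simp: K_in_W)

lemma kcomb_cong:
  "(\<And>i. i < n \<Longrightarrow> ls i (b i) = ls' i (b' i)) \<Longrightarrow> kcomb n ls b = kcomb n ls' b'"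
  unfolding kcomb_def by (rule sum.cong) auto

lemma kcomb_Suc: "kcomb (Suc n) ls b = kcomb n ls b + ls n (b n)"
  unfolding kcomb_def by simp

lemma kcomb_diff: "kcomb n (\<lambda>i. ls i - ls' i) b = kcomb n ls b - kcomb n ls' b"
  unfolding kcomb_def by (simp add: sum_subtractf)

lemma kcomb_add: "kcomb n (\<lambda>i. ls i + ls' i) b = kcomb n ls b + kcomb n ls' b"
  unfolding kcomb_def by (simp add: sum.distrib)

lemma kcomb_neg: "kcomb n (\<lambda>i. - ls i) b = - kcomb n ls b"
  unfolding kcomb_def by (simp add: sum_negf)

lemma K_kcomb: "m \<in> K \<Longrightarrow> m (kcomb n ls b) = kcomb n (\<lambda>i. m \<circ> ls i) b"
  unfolding kcomb_def by (simp add: endo.linear_sum[OF K_linear])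

lemma kcomb_delta:
  assumes "k < n"
  shows "kcomb n (\<lambda>i. if i = k then f else 0) b = f (b k)"
proof -
  have "kcomb n (\<lambda>i. if i = k then f else 0) b = (\<Sum>i<n. if i = k then f (b i) else 0)"
    unfolding kcomb_def by (rule sum.cong) auto
  also have "\<dots> = f (b k)"
    using assms by simp
  finally show ?thesis .
qed

lemma kcomb_zero: "kcomb n (\<lambda>i. 0) b = 0"
  unfolding kcomb_def by simp

lemma K_independentD:
  "K_independent n b \<Longrightarrow> (\<forall>i<n. ls i \<in> K) \<Longrightarrow> kcomb n ls b = 0 \<Longrightarrow> i < n \<Longrightarrow> ls i = 0"
  unfolding K_independent_def by blast

lemma K_independent_in_W: "K_independent n b \<Longrightarrow> i < n \<Longrightarrow> b i \<in> W"
  unfolding K_independent_def by blast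

lemma K_span_coefficient_zero:
  assumes w: "w \<in> W" "\<not> in_K_span n b w" and ls: "\<forall>i<n. ls i \<in> K" and l: "l \<in> K"
    and sum: "kcomb n ls b + l w = 0"
  shows "l = 0"
proof (rule ccontr)
  assume "l \<noteq> 0"
  define m where "m = endo_inv l"
  have m: "m \<in> K" "m (l w) = w"
    unfolding m_def using K_inverse[OF l \<open>l \<noteq> 0\<close>] P_id[OF w(1)] by simp_all
  have "m (kcomb n ls b) + w = 0"
    using arg_cong[OF sum, of m] m endo.linear_add[OF K_linear[OF m(1)]]
      endo.linear_0[OF K_linear[OF m(1)]] by simp
  then have "w = - m (kcomb n ls b)"
    by (simp add: add_eq_0_iff)
  also have "\<dots> = kcomb n (\<lambda>i. - (m \<circ> ls i)) b"
    by (simp add: kcomb_neg K_kcomb[OF m(1)])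
  finally have w_eq: "w = kcomb n (\<lambda>i. - (m \<circ> ls i)) b" .
  have "in_K_span n b w"
    unfolding in_K_span_def
  proof (intro exI[of _ "\<lambda>i. - (m \<circ> ls i)"] conjI)
    show "\<forall>i<n. - (m \<circ> ls i) \<in> K"
      using ls m(1) by (auto intro!: K_neg K_comp)
  qed (fact w_eq)
  with w(2) show False
    by contradiction
qed

lemma K_independent_extend:
  assumes ind: "K_independent n b" and w: "w \<in> W" "\<not> in_K_span n b w"
  shows "K_independent (Suc n) (b(n := w))"
proof -
  have "\<forall>i<Suc n. ls i = 0"
    if ls: "\<forall>i<Suc n. ls i \<in> K" "kcomb (Suc n) ls (b(n := w)) = 0" for ls
  proof -
    have "kcomb n ls (b(n := w)) = kcomb n ls b"
      by (rule kcomb_cong) simp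
    with ls(2) have sum: "kcomb n ls b + ls n w = 0"
      unfolding kcomb_Suc by simp
    moreover have "\<forall>i<n. ls i \<in> K" "ls n \<in> K"
      using ls(1) by simp_all
    ultimately have "ls n = 0"
      using K_span_coefficient_zero[OF w, of ls "ls n"] by blast
    moreover from this sum have "kcomb n ls b = 0"
      by simp
    then have "\<forall>i<n. ls i = 0"
      using K_independentD[OF ind, of ls] ls(1) by simp
    ultimately show ?thesis
      using less_Suc_eq by auto
  qed
  moreover have "\<forall>i<Suc n. (b(n := w)) i \<in> W"
    using K_independent_in_W[OF ind] w(1) by (simp add: less_Suc_eq)
  ultimately show ?thesis
    unfolding K_independent_def by blast
qed

lemma K_independent_inj:
  assumes ind: "K_independent n b"
  shows "inj_on b {..<n}"
proof (rule inj_onI, rule ccontr)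
  fix i j assume i: "i \<in> {..<n}" and j: "j \<in> {..<n}" and "b i = b j" "i \<noteq> j"
  let ?ls = "\<lambda>k. (if k = i then P else 0) - (if k = j then P else 0)"
  have "kcomb n ?ls b = P (b i) - P (b j)"
    using kcomb_diff[of n "\<lambda>k. if k = i then P else 0" "\<lambda>k. if k = j then P else 0" b]
      kcomb_delta[of i n P b] kcomb_delta[of j n P b] i j by simp
  with \<open>b i = b j\<close> have "kcomb n ?ls b = 0"
    by simp
  moreover have "\<forall>k<n. ?ls k \<in> K"
    by (auto intro!: K_diff P_in_K K_zero K_neg)
  ultimately have "?ls i = 0"
    using K_independentD[OF ind, of ?ls i] i by blast
  with \<open>i \<noteq> j\<close> P_nonzero show False
    by simp
qed

lemma K_independent_imp_independent:
  assumes ind: "K_independent n b"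
  shows "independent (b ` {..<n})"
proof (rule independent_if_scalars_zero)
  show "finite (b ` {..<n})"
    by simp
  fix f x assume sum0: "(\<Sum>x\<in>b ` {..<n}. scale (f x) x) = 0" and x: "x \<in> b ` {..<n}"
  let ?ls = "\<lambda>k z. scale (f (b k)) (P z)"
  have "kcomb n ?ls b = (\<Sum>k<n. scale (f (b k)) (b k))"
    using ind unfolding kcomb_def K_independent_def by (intro sum.cong) (auto simp: P_id)
  also have "\<dots> = 0"
    using sum.reindex[OF K_independent_inj[OF ind], of "\<lambda>x. scale (f x) x"] sum0 by simp
  finally have "kcomb n ?ls b = 0" .
  moreover have "\<forall>k<n. ?ls k \<in> K"
    using K_scale[OF P_in_K] by auto
  ultimately have zero: "?ls k = 0" if "k < n" for k
    using K_independentD[OF ind, of ?ls k] that by blast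
  obtain k where k: "k < n" "x = b k"
    using x by auto
  obtain w where w: "w \<in> W" "w \<noteq> 0"
    using W_ex by blast
  have "scale (f (b k)) (P w) = 0"
    using zero[OF k(1)] by (metis zero_fun_apply)
  then show "f x = 0"
    using k P_id[OF w(1)] w(2) by simp
qed

lemma K_independent_bound:
  assumes "K_independent n b" "finite B" "span B = UNIV"
  shows "n \<le> card B"
  using independent_span_bound[OF assms(2) K_independent_imp_independent[OF assms(1)]] assms(3)
    card_image[OF K_independent_inj[OF assms(1)]] by simp

lemma K_basis_ex: "\<exists>d b. K_independent d b \<and> (\<forall>w\<in>W. in_K_span d b w)"
proof -
  obtain B where B: "finite B" "span B = UNIV"
    using fin unfolding fin_dim_alg_def by blast
  let ?Q = "\<lambda>n. \<exists>b. K_independent n b"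
  have "?Q 0"
    unfolding K_independent_def kcomb_def by auto
  moreover have "\<forall>n. ?Q n \<longrightarrow> n \<le> card B"
    using K_independent_bound B by blast
  ultimately obtain d where "?Q d" and d_max: "\<forall>n. ?Q n \<longrightarrow> n \<le> d"
    by (rule Nat.ex_has_greatest_nat[elim_format]) blast
  then obtain b where b: "K_independent d b"
    by blast
  have "in_K_span d b w" if "w \<in> W" for w
  proof (rule ccontr)
    assume "\<not> in_K_span d b w"
    from K_independent_extend[OF b that this] d_max show False
      by fastforce
  qed
  with b show ?thesis
    by blast
qed

definition kdim :: nat where
  "kdim = (SOME d. \<exists>b. K_independent d b \<and> (\<forall>w\<in>W. in_K_span d b w))"

definition kbasis :: "nat \<Rightarrow> 'a" where
  "kbasis = (SOME b. K_independent kdim b \<and> (\<forall>w\<in>W. in_K_span kdim b w))"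

lemma kbasis: "K_independent kdim kbasis" "\<forall>w\<in>W. in_K_span kdim kbasis w"
proof -
  have "\<exists>b. K_independent kdim b \<and> (\<forall>w\<in>W. in_K_span kdim b w)"
    unfolding kdim_def using K_basis_ex by (rule someI_ex)
  then have "K_independent kdim kbasis \<and> (\<forall>w\<in>W. in_K_span kdim kbasis w)"
    unfolding kbasis_def by (rule someI_ex)
  then show "K_independent kdim kbasis" "\<forall>w\<in>W. in_K_span kdim kbasis w"
    by blast+
qed

lemma kbasis_in_W: "i < kdim \<Longrightarrow> kbasis i \<in> W"
  using K_independent_in_W[OF kbasis(1)] .

definition kcoord :: "'a \<Rightarrow> nat \<Rightarrow> 'a \<Rightarrow> 'a" where
  "kcoord w = (SOME ls. (\<forall>i<kdim. ls i \<in> K) \<and> w = kcomb kdim ls kbasis)"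

lemma kcoord:
  assumes "w \<in> W"
  shows kcoord_in_K: "i < kdim \<Longrightarrow> kcoord w i \<in> K"
    and kcomb_kcoord: "kcomb kdim (kcoord w) kbasis = w"
proof -
  have "\<exists>ls. (\<forall>i<kdim. ls i \<in> K) \<and> w = kcomb kdim ls kbasis"
    using kbasis(2) assms unfolding in_K_span_def by blast
  then have "(\<forall>i<kdim. kcoord w i \<in> K) \<and> w = kcomb kdim (kcoord w) kbasis"
    unfolding kcoord_def by (rule someI_ex)
  then show "i < kdim \<Longrightarrow> kcoord w i \<in> K" "kcomb kdim (kcoord w) kbasis = w"
    by (blast, metis)
qed

lemma kcoord_kcomb:
  assumes ls: "\<forall>i<kdim. ls i \<in> K" and i: "i < kdim"
  shows "kcoord (kcomb kdim ls kbasis) i = ls i"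
proof -
  let ?w = "kcomb kdim ls kbasis"
  have w: "?w \<in> W"
    using ls kcomb_in_W by auto
  have "kcomb kdim (\<lambda>i. kcoord ?w i - ls i) kbasis = 0"
    unfolding kcomb_diff kcomb_kcoord[OF w] by simp
  moreover have "\<forall>i<kdim. kcoord ?w i - ls i \<in> K"
    using kcoord_in_K[OF w] ls K_diff by auto
  ultimately have "kcoord ?w i - ls i = 0"
    using K_independentD[OF kbasis(1), of "\<lambda>i. kcoord ?w i - ls i" i] i by simp
  then show ?thesis
    by simp
qed

lemma kcoord_add:
  assumes "u \<in> W" "v \<in> W" "i < kdim"
  shows "kcoord (u + v) i = kcoord u i + kcoord v i"
proof -
  have uv: "u + v = kcomb kdim (\<lambda>i. kcoord u i + kcoord v i) kbasis"
    unfolding kcomb_add kcomb_kcoord[OF assms(1)] kcomb_kcoord[OF assms(2)] ..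
  have "\<forall>i<kdim. kcoord u i + kcoord v i \<in> K"
    using kcoord_in_K assms K_add by auto
  then show ?thesis
    unfolding uv by (rule kcoord_kcomb[OF _ assms(3)])
qed

lemma kcoord_K:
  assumes "m \<in> K" "u \<in> W" "i < kdim"
  shows "kcoord (m u) i = m \<circ> kcoord u i"
proof -
  have mu: "m u = kcomb kdim (\<lambda>i. m \<circ> kcoord u i) kbasis"
    unfolding K_kcomb[OF assms(1), symmetric] kcomb_kcoord[OF assms(2)] ..
  have "\<forall>i<kdim. m \<circ> kcoord u i \<in> K"
    using kcoord_in_K assms K_comp by auto
  then show ?thesis
    unfolding mu by (rule kcoord_kcomb[OF _ assms(3)])
qed

lemma kcoord_kbasis:
  assumes "k < kdim" "i < kdim"
  shows "kcoord (kbasis k) i = (if i = k then P else 0)"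
proof -
  have k: "kbasis k = kcomb kdim (\<lambda>i. if i = k then P else 0) kbasis"
    using kcomb_delta[OF assms(1)] P_id[OF kbasis_in_W[OF assms(1)]] by simp
  have "\<forall>i<kdim. (if i = k then P else 0) \<in> K"
    using P_in_K K_zero by auto
  then show ?thesis
    unfolding k by (rule kcoord_kcomb[OF _ assms(2)])
qed

lemma kcoord_0: "i < kdim \<Longrightarrow> kcoord 0 i = 0"
  using kcoord_kcomb[of "\<lambda>i. 0" i] K_zero by (simp add: kcomb_zero)

lemma kcoord_sum:
  "(\<And>j. j \<in> J \<Longrightarrow> f j \<in> W) \<Longrightarrow> i < kdim \<Longrightarrow> kcoord (sum f J) i = (\<Sum>j\<in>J. kcoord (f j) i)"
  by (induct J rule: infinite_finite_induct)
    (simp_all add: kcoord_0 kcoord_add subspace_sum[OF subspace_W])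

definition ktrace :: "'a \<Rightarrow> 'a \<Rightarrow> 'a" where
  "ktrace a = (\<Sum>i<kdim. kcoord (P (a * kbasis i)) i)"

lemma ktrace_in_K: "ktrace a \<in> K"
  unfolding ktrace_def by (rule K_sum) (auto intro: kcoord_in_K P_in_W)

lemma P_mult_kcoord_expansion:
  assumes w: "w \<in> W"
  shows "P (x * w) = (\<Sum>k<kdim. kcoord w k (P (x * kbasis k)))"
proof -
  have "P (x * w) = P (x * kcomb kdim (kcoord w) kbasis)"
    unfolding kcomb_kcoord[OF w] ..
  also have "\<dots> = (\<Sum>k<kdim. P (x * kcoord w k (kbasis k)))"
    unfolding kcomb_def sum_distrib_left endo.linear_sum[OF linear_P] ..
  also have "\<dots> = (\<Sum>k<kdim. kcoord w k (P (x * kbasis k)))"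
    by (rule sum.cong) (auto simp: K_action kcoord_in_K w kbasis_in_W)
  finally show ?thesis .
qed

lemma ktrace_mult:
  "ktrace (x * y) =
    (\<Sum>j<kdim. \<Sum>k<kdim. kcoord (P (y * kbasis j)) k \<circ> kcoord (P (x * kbasis k)) j)"
  unfolding ktrace_def
proof (rule sum.cong[OF refl])
  fix j assume j: "j \<in> {..<kdim}"
  have "P (x * y * kbasis j) = P (x * P (y * kbasis j))"
    using P_action[OF kbasis_in_W] j by simp
  also have "\<dots> = (\<Sum>k<kdim. kcoord (P (y * kbasis j)) k (P (x * kbasis k)))"
    by (rule P_mult_kcoord_expansion[OF P_in_W])
  finally have expand: "P (x * y * kbasis j) =
      (\<Sum>k<kdim. kcoord (P (y * kbasis j)) k (P (x * kbasis k)))" .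
  show "kcoord (P (x * y * kbasis j)) j =
      (\<Sum>k<kdim. kcoord (P (y * kbasis j)) k \<circ> kcoord (P (x * kbasis k)) j)"
    unfolding expand using j
    by (subst kcoord_sum)
      (auto intro!: sum.cong K_in_W[OF kcoord_in_K[OF P_in_W]] kcoord_K kcoord_in_K P_in_W)
qed

lemma ktrace_commute: "ktrace (x * y) = ktrace (y * x)"
proof -
  have "ktrace (y * x) =
      (\<Sum>j<kdim. \<Sum>k<kdim. kcoord (P (x * kbasis j)) k \<circ> kcoord (P (y * kbasis k)) j)"
    by (rule ktrace_mult)
  also have "\<dots> =
      (\<Sum>k<kdim. \<Sum>j<kdim. kcoord (P (x * kbasis j)) k \<circ> kcoord (P (y * kbasis k)) j)"
    by (rule sum.swap)
  also have "\<dots> =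
      (\<Sum>k<kdim. \<Sum>j<kdim. kcoord (P (y * kbasis k)) j \<circ> kcoord (P (x * kbasis j)) k)"
    by (intro sum.cong refl K_comp_commute kcoord_in_K P_in_W) auto
  also have "\<dots> = ktrace (x * y)"
    by (rule ktrace_mult[symmetric])
  finally show ?thesis ..
qed

lemma ktrace_add: "ktrace (x + y) = ktrace x + ktrace y"
  unfolding ktrace_def sum.distrib[symmetric]
  by (rule sum.cong) (auto simp: distrib_right P_add kcoord_add P_in_W)

lemma ktrace_scale: "ktrace (scale c x) = (\<lambda>z. scale c (P z)) \<circ> ktrace x"
proof -
  let ?s = "\<lambda>z. scale c (P z)"
  have s: "?s \<in> K"
    by (rule K_scale[OF P_in_K])
  have "ktrace (scale c x) = (\<Sum>i<kdim. ?s \<circ> kcoord (P (x * kbasis i)) i)"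
    unfolding ktrace_def
  proof (rule sum.cong[OF refl])
    fix i assume "i \<in> {..<kdim}"
    moreover have "P (scale c x * kbasis i) = ?s (P (x * kbasis i))"
      by (simp add: scale_mult_left P_scale P_P)
    ultimately show "kcoord (P (scale c x * kbasis i)) i = ?s \<circ> kcoord (P (x * kbasis i)) i"
      using kcoord_K[OF s P_in_W] by simp
  qed
  also have "\<dots> = ?s \<circ> ktrace x"
    unfolding ktrace_def
    by (auto simp: fun_eq_iff sum_fun_apply endo.linear_sum[OF K_linear[OF s]])
  finally show ?thesis .
qed

lemma ktrace_annihilated: "(\<And>w. w \<in> W \<Longrightarrow> P (n * w) = 0) \<Longrightarrow> ktrace n = 0"
  unfolding ktrace_def by (auto intro!: sum.neutral simp: kbasis_in_W kcoord_0)

text \<open>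
  A list of pairs \<open>(y, l)\<close> with \<open>l \<in> K\<close> stands for the element \<open>\<Sum> y \<otimes> l\<close> of
  \<open>A \<otimes> K\<close>, acting on \<open>W\<close> by \<open>w \<mapsto> \<Sum> y \<cdot> l w\<close>.
\<close>

definition act :: "('a \<times> ('a \<Rightarrow> 'a)) list \<Rightarrow> 'a \<Rightarrow> 'a" where
  "act es w = (\<Sum>(y, l)\<leftarrow>es. P (y * l w))"

definition K_terms :: "('a \<times> ('a \<Rightarrow> 'a)) list \<Rightarrow> bool" where
  "K_terms es \<longleftrightarrow> (\<forall>p\<in>set es. snd p \<in> K)"

lemma act_Nil [simp]: "act [] w = 0"
  by (simp add: act_def)

lemma act_Cons [simp]: "act ((y, l) # es) w = P (y * l w) + act es w"
  by (simp add: act_def)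

lemma act_append: "act (es1 @ es2) w = act es1 w + act es2 w"
  by (simp add: act_def)

lemma K_terms_Nil [simp]: "K_terms []"
  by (simp add: K_terms_def)

lemma K_terms_Cons [simp]: "K_terms ((y, l) # es) \<longleftrightarrow> l \<in> K \<and> K_terms es"
  by (simp add: K_terms_def)

lemma K_terms_append [simp]: "K_terms (es1 @ es2) \<longleftrightarrow> K_terms es1 \<and> K_terms es2"
  by (auto simp: K_terms_def)

lemma act_in_W: "act es w \<in> W"
proof (induct es)
  case (Cons p es)
  then show ?case
    by (cases p) (simp add: subspace_add[OF subspace_W] P_in_W)
qed (simp add: subspace_0[OF subspace_W])

lemma act_map_neg: "act (map (\<lambda>(y, l). (- y, l)) es) w = - act es w"
  by (induct es) (auto simp: endo.linear_neg[OF linear_P])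

lemma K_terms_map_neg: "K_terms es \<Longrightarrow> K_terms (map (\<lambda>(y, l). (- y, l)) es)"
  by (induct es) auto

lemma act_map_mult: "K_terms es \<Longrightarrow> act (map (\<lambda>(y, l). (a * y, l)) es) w = P (a * act es w)"
proof (induct es)
  case Nil
  then show ?case by (simp add: P_0)
next
  case (Cons p es)
  obtain y l where p: "p = (y, l)"
    by (cases p)
  with Cons have "l \<in> K"
    by simp
  then have "P (a * y * l w) = P (a * P (y * l w))"
    using P_action[OF K_in_W] by simp
  with Cons p show ?case
    by (simp add: distrib_left P_add)
qed

lemma K_terms_map_mult: "K_terms es \<Longrightarrow> K_terms (map (\<lambda>(y, l). (a * y, l)) es)"
  by (induct es) auto

lemma act_map_scale: "act (map (\<lambda>(y, l). (scale c y, l)) es) w = scale c (act es w)"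
  by (induct es) (auto simp: scale_mult_left P_scale scale_right_distrib)

lemma K_terms_map_scale: "K_terms es \<Longrightarrow> K_terms (map (\<lambda>(y, l). (scale c y, l)) es)"
  by (induct es) auto

lemma act_map_comp:
  "K_terms es \<Longrightarrow> m \<in> K \<Longrightarrow> act (map (\<lambda>(y, l). (y, m \<circ> l)) es) w = m (act es w)"
proof (induct es)
  case Nil
  then show ?case by (simp add: endo.linear_0[OF K_linear])
next
  case (Cons p es)
  obtain y l where p: "p = (y, l)"
    by (cases p)
  with Cons have "l \<in> K"
    by simp
  then have "P (y * m (l w)) = m (P (y * l w))"
    using K_action[OF Cons(3) K_in_W] by simp
  with Cons p show ?case
    by (simp add: endo.linear_add[OF K_linear])
qed

lemma K_terms_map_comp: "K_terms es \<Longrightarrow> m \<in> K \<Longrightarrow> K_terms (map (\<lambda>(y, l). (y, m \<circ> l)) es)"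
  by (induct es) (auto intro: K_comp)

lemma act_concat: "act (concat (map E [0..<n])) w = (\<Sum>i<n. act (E i) w)"
  by (induct n) (auto simp: act_append)

lemma K_terms_concat: "(\<And>i. K_terms (E i)) \<Longrightarrow> K_terms (concat (map E [0..<n]))"
  by (induct n) auto

definition dense_on :: "nat \<Rightarrow> (nat \<Rightarrow> 'a) \<Rightarrow> bool" where
  "dense_on n b \<longleftrightarrow>
     (\<forall>ws. (\<forall>i<n. ws i \<in> W) \<longrightarrow> (\<exists>es. K_terms es \<and> (\<forall>i<n. act es (b i) = ws i)))"

definition separates :: "nat \<Rightarrow> (nat \<Rightarrow> 'a) \<Rightarrow> bool" where
  "separates n b \<longleftrightarrow> (\<exists>es. K_terms es \<and> (\<forall>i<n. act es (b i) = 0) \<and> act es (b n) \<noteq> 0)"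

lemma act_determined:
  assumes "\<not> separates n b" and "K_terms es1" "K_terms es2"
    and "\<forall>i<n. act es1 (b i) = act es2 (b i)"
  shows "act es1 (b n) = act es2 (b n)"
proof -
  let ?es = "es1 @ map (\<lambda>(y, l). (- y, l)) es2"
  have act_es: "act ?es w = act es1 w - act es2 w" for w
    by (simp add: act_append act_map_neg)
  have "K_terms ?es"
    using assms(2,3) K_terms_map_neg by simp
  moreover have "\<forall>i<n. act ?es (b i) = 0"
    using assms(4) act_es by simp
  ultimately have "act ?es (b n) = 0"
    using assms(1) unfolding separates_def by blast
  then show ?thesis
    using act_es by simp
qed

definition delta_terms :: "nat \<Rightarrow> (nat \<Rightarrow> 'a) \<Rightarrow> nat \<Rightarrow> 'a \<Rightarrow> ('a \<times> ('a \<Rightarrow> 'a)) list \<Rightarrow> bool"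
  where "delta_terms n b i x es \<longleftrightarrow> K_terms es \<and> (\<forall>j<n. act es (b j) = (if j = i then P x else 0))"

lemma delta_terms_ex:
  assumes "dense_on n b"
  shows "\<exists>es. delta_terms n b i x es"
proof -
  have "\<forall>j<n. (if j = i then P x else 0) \<in> W"
    using P_in_W subspace_0[OF subspace_W] by simp
  then show ?thesis
    using assms[unfolded dense_on_def, rule_format, of "\<lambda>j. if j = i then P x else 0"]
    unfolding delta_terms_def by blast
qed

text \<open>
  The inductive step of the density theorem: if \<open>b n\<close> cannot be separated from
  \<open>b 0, \<dots>, b (n - 1)\<close>, the value at \<open>b n\<close> of \<open>delta_terms n b i x\<close> depends only on \<open>x\<close>,
  this defines an element of \<open>K\<close>, and \<open>b n\<close> is the \<open>K\<close>-combination of the \<open>b i\<close> with these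
  coefficients, contradicting \<open>K\<close>-independence.
\<close>

definition coordinate_map :: "nat \<Rightarrow> (nat \<Rightarrow> 'a) \<Rightarrow> nat \<Rightarrow> 'a \<Rightarrow> 'a" where
  "coordinate_map n b i x = act (SOME es. delta_terms n b i x es) (b n)"

lemma coordinate_map_eq:
  assumes sep: "\<not> separates n b" and es: "delta_terms n b i x es"
  shows "coordinate_map n b i x = act es (b n)"
proof -
  define es' where "es' = (SOME es. delta_terms n b i x es)"
  have "delta_terms n b i x es'"
    unfolding es'_def using es by (rule someI)
  with es have "act es' (b n) = act es (b n)"
    unfolding delta_terms_def by (intro act_determined[OF sep]) auto
  then show ?thesis
    unfolding coordinate_map_def es'_def .
qed

lemma coordinate_map_module_endo:
  assumes sep: "\<not> separates n b" and dense: "dense_on n b"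
  shows "coordinate_map n b i \<in> module_endo"
proof -
  define f where "f = coordinate_map n b i"
  obtain E where E: "delta_terms n b i x (E x)" for x
    using delta_terms_ex[OF dense] by metis
  have f_eq: "f x = act es (b n)" if "delta_terms n b i x es" for x es
    unfolding f_def using coordinate_map_eq[OF sep that] .
  have "lin f"
  proof (rule linI)
    show "f (x + y) = f x + f y" for x y
      using E[of x] E[of y] f_eq[of "x + y" "E x @ E y"] f_eq[OF E[of x]] f_eq[OF E[of y]]
      by (auto simp: delta_terms_def act_append P_add)
    show "f (scale c x) = scale c (f x)" for c x
      using E[of x] f_eq[of "scale c x" "map (\<lambda>(y, l). (scale c y, l)) (E x)"] f_eq[OF E[of x]]
      by (auto simp: delta_terms_def act_map_scale K_terms_map_scale P_scale)
  qed
  moreover have "f x = f (P x)" for x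
    using E[of "P x"] f_eq[of x "E (P x)"] f_eq[OF E[of "P x"]] by (simp add: delta_terms_def P_P)
  moreover have "f x \<in> W" for x
    using f_eq[OF E[of x]] act_in_W by simp
  moreover have "f (P (a * w)) = P (a * f w)" if "w \<in> W" for a w
  proof -
    have "delta_terms n b i (P (a * w)) (map (\<lambda>(y, l). (a * y, l)) (E w))"
      using E[of w] unfolding delta_terms_def
      by (auto simp: act_map_mult K_terms_map_mult P_id[OF that] P_P P_0)
    then have "f (P (a * w)) = act (map (\<lambda>(y, l). (a * y, l)) (E w)) (b n)"
      by (rule f_eq)
    also have "\<dots> = P (a * f w)"
      using E[of w] f_eq[OF E[of w]] by (simp add: delta_terms_def act_map_mult)
    finally show ?thesis .
  qed
  ultimately show ?thesis
    unfolding f_def module_endo_def by blast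
qed

lemma coordinate_map_in_K:
  assumes sep: "\<not> separates n b" and dense: "dense_on n b"
  shows "coordinate_map n b i \<in> K"
proof (rule K_memI[OF coordinate_map_module_endo[OF sep dense]])
  fix g x assume g: "g \<in> K"
  obtain es where es: "delta_terms n b i x es"
    using delta_terms_ex[OF dense] by blast
  have "delta_terms n b i (g x) (map (\<lambda>(y, l). (y, g \<circ> l)) es)"
    using es g unfolding delta_terms_def
    by (auto simp: act_map_comp K_terms_map_comp K_P[OF g] endo.linear_0[OF K_linear[OF g]]
        P_id[OF K_in_W[OF g]])
  then have "coordinate_map n b i (g x) = act (map (\<lambda>(y, l). (y, g \<circ> l)) es) (b n)"
    by (rule coordinate_map_eq[OF sep])
  also have "\<dots> = g (coordinate_map n b i x)"
    using es g coordinate_map_eq[OF sep es] by (simp add: delta_terms_def act_map_comp)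
  finally show "coordinate_map n b i (g x) = g (coordinate_map n b i x)" .
qed

lemma not_separates_imp_kcomb:
  assumes sep: "\<not> separates n b" and dense: "dense_on n b"
    and b: "\<And>i. i \<le> n \<Longrightarrow> b i \<in> W"
  shows "b n = kcomb n (coordinate_map n b) b"
proof -
  have "\<forall>i. \<exists>es. delta_terms n b i (b i) es"
    using delta_terms_ex[OF dense] by blast
  then obtain E where E: "delta_terms n b i (b i) (E i)" for i
    by metis
  define Es where "Es = concat (map E [0..<n])"
  have "K_terms Es"
    unfolding Es_def using E unfolding delta_terms_def by (intro K_terms_concat) auto
  moreover have "act Es (b j) = b j" if "j < n" for j
  proof -
    have "act Es (b j) = (\<Sum>i<n. act (E i) (b j))"
      unfolding Es_def by (rule act_concat)
    also have "\<dots> = (\<Sum>i<n. if j = i then P (b i) else 0)"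
      using E that unfolding delta_terms_def by (intro sum.cong) auto
    also have "\<dots> = b j"
      using that b by (simp add: P_id)
    finally show ?thesis .
  qed
  ultimately have "act [(1, P)] (b n) = act Es (b n)"
    using b by (intro act_determined[OF sep]) (auto simp: P_in_K P_P P_id)
  also have "\<dots> = (\<Sum>i<n. act (E i) (b n))"
    unfolding Es_def by (rule act_concat)
  also have "\<dots> = kcomb n (coordinate_map n b) b"
    unfolding kcomb_def using coordinate_map_eq[OF sep E] by simp
  finally show ?thesis
    using b by (simp add: P_P P_id)
qed

lemma K_independent_Suc_not_kcomb:
  assumes ind: "K_independent (Suc n) b" and ls: "\<forall>i<n. ls i \<in> K"
  shows "b n \<noteq> kcomb n ls b"
proof
  assume b_n: "b n = kcomb n ls b"
  define ls' where "ls' i = (if i < n then ls i else - P)" for i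
  have "kcomb (Suc n) ls' b = kcomb n ls b - b n"
    unfolding kcomb_Suc ls'_def using P_id K_independent_in_W[OF ind]
    by (simp add: kcomb_def)
  then have "kcomb (Suc n) ls' b = 0"
    using b_n by simp
  moreover have "\<forall>i<Suc n. ls' i \<in> K"
    unfolding ls'_def using ls K_neg P_in_K by auto
  ultimately have "ls' n = 0"
    using K_independentD[OF ind, of ls' n] by simp
  then show False
    unfolding ls'_def using P_nonzero by simp
qed

lemma K_independent_Suc:
  assumes ind: "K_independent (Suc n) b"
  shows "K_independent n b"
proof -
  have "ls i = 0" if ls: "\<forall>i<n. ls i \<in> K" "kcomb n ls b = 0" and i: "i < n" for ls i
  proof -
    have "kcomb (Suc n) (ls(n := 0)) b = kcomb n ls b"
      unfolding kcomb_Suc by (auto intro: kcomb_cong)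
    moreover have "\<forall>i<Suc n. (ls(n := 0)) i \<in> K"
      using ls K_zero less_Suc_eq by auto
    ultimately have "(ls(n := 0)) i = 0"
      using K_independentD[OF ind, of "ls(n := 0)" i] ls(2) i by simp
    then show "ls i = 0"
      using i by simp
  qed
  then show ?thesis
    using K_independent_in_W[OF ind] unfolding K_independent_def by auto
qed

lemma K_independent_separates:
  assumes ind: "K_independent (Suc n) b" and dense: "dense_on n b"
  shows "separates n b"
proof (rule ccontr)
  assume sep: "\<not> separates n b"
  then have "b n = kcomb n (coordinate_map n b) b"
    using not_separates_imp_kcomb dense K_independent_in_W[OF ind] by simp
  with K_independent_Suc_not_kcomb[OF ind] coordinate_map_in_K[OF sep dense] show False
    by blast
qed

lemma dense_on_Suc:
  assumes ind: "K_independent (Suc n) b" and dense: "dense_on n b"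
  shows "dense_on (Suc n) b"
  unfolding dense_on_def
proof (intro allI impI)
  fix ws assume ws: "\<forall>i<Suc n. ws i \<in> W"
  obtain es0 where es0: "K_terms es0" "\<forall>i<n. act es0 (b i) = 0" "act es0 (b n) \<noteq> 0"
    using K_independent_separates[OF ind dense] unfolding separates_def by blast
  have "\<forall>i<n. ws i \<in> W"
    using ws by simp
  then obtain es1 where es1: "K_terms es1" "\<forall>i<n. act es1 (b i) = ws i"
    using dense unfolding dense_on_def by blast
  have "ws n - act es1 (b n) \<in> W"
    using ws act_in_W subspace_diff[OF subspace_W] by auto
  then obtain a where a: "P (a * act es0 (b n)) = ws n - act es1 (b n)"
    using P_transitive[OF act_in_W es0(3)] by blast
  let ?es = "map (\<lambda>(y, l). (a * y, l)) es0 @ es1"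
  have "K_terms ?es"
    using es0 es1 K_terms_map_mult by simp
  moreover have "act ?es (b i) = ws i" if "i < Suc n" for i
    using that es0 es1 a by (cases "i = n") (auto simp: act_append act_map_mult P_0)
  ultimately show "\<exists>es. K_terms es \<and> (\<forall>i<Suc n. act es (b i) = ws i)"
    by blast
qed

lemma density: "K_independent n b \<Longrightarrow> dense_on n b"
proof (induct n)
  case 0
  then show ?case
    unfolding dense_on_def by (auto intro: exI[of _ "[]"])
next
  case (Suc n)
  then show ?case
    using K_independent_Suc dense_on_Suc by blast
qed

lemma kdim_pos: "0 < kdim"
proof (rule ccontr)
  assume "\<not> 0 < kdim"
  then have "kdim = 0"
    by simp
  obtain w where w: "w \<in> W" "w \<noteq> 0"
    using W_ex by blast
  then have "in_K_span kdim kbasis w"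
    using kbasis(2) by blast
  with \<open>kdim = 0\<close> have "w = 0"
    unfolding in_K_span_def kcomb_def by simp
  with w show False
    by simp
qed

lemma ktrace_act:
  "K_terms es \<Longrightarrow> (\<Sum>j<kdim. kcoord (act (map (\<lambda>(y, l). (z * y, l)) es) (kbasis j)) j)
      = (\<Sum>(y, l)\<leftarrow>es. l \<circ> ktrace (z * y))"
proof (induct es)
  case Nil
  then show ?case by (simp add: kcoord_0)
next
  case (Cons p es)
  obtain y l where p: "p = (y, l)"
    by (cases p)
  with Cons.prems have l: "l \<in> K" and es: "K_terms es"
    by auto
  let ?es = "map (\<lambda>(y, l). (z * y, l)) es"
  have "(\<Sum>j<kdim. kcoord (act (map (\<lambda>(y, l). (z * y, l)) (p # es)) (kbasis j)) j)
      = (\<Sum>j<kdim. kcoord (P (z * y * l (kbasis j))) j + kcoord (act ?es (kbasis j)) j)"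
    unfolding p by (intro sum.cong refl) (simp add: kcoord_add P_in_W act_in_W)
  also have "\<dots> = (\<Sum>j<kdim. l \<circ> kcoord (P (z * y * kbasis j)) j)
      + (\<Sum>j<kdim. kcoord (act ?es (kbasis j)) j)"
    unfolding sum.distrib
    by (intro arg_cong2[where f = "(+)"] sum.cong refl)
      (simp add: K_action[OF l kbasis_in_W, symmetric] kcoord_K[OF l P_in_W])
  also have "(\<Sum>j<kdim. l \<circ> kcoord (P (z * y * kbasis j)) j) = l \<circ> ktrace (z * y)"
    unfolding ktrace_def by (auto simp: fun_eq_iff sum_fun_apply endo.linear_sum[OF K_linear[OF l]])
  finally show ?case
    using Cons.hyps[OF es] p by simp
qed

lemma K_terms_sum_nonzero:
  assumes "K_terms es" and "(\<Sum>(y, l)\<leftarrow>es. l \<circ> g y) \<noteq> 0"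
  shows "\<exists>y. g y \<noteq> 0"
proof (rule ccontr)
  assume "\<not> (\<exists>y. g y \<noteq> 0)"
  then have "l \<circ> g y = 0" if "(y, l) \<in> set es" for y l
    using that assms(1) endo.linear_0[OF K_linear] unfolding K_terms_def by (auto simp: fun_eq_iff)
  then have "(\<Sum>(y, l)\<leftarrow>es. l \<circ> g y) = (\<Sum>_\<leftarrow>es. 0)"
    by (intro arg_cong[where f = sum_list] map_cong refl) auto
  with assms(2) show False
    by simp
qed

text \<open>
  By density some element of \<open>A \<otimes> K\<close> maps \<open>kbasis 0\<close> to \<open>v0\<close> and kills the other basis
  vectors; precomposing it with \<open>x * a\<close>, where \<open>x \<cdot> (a \<cdot> v0) = kbasis 0\<close>, gives an operator
  whose \<open>K\<close>-trace is the unit \<open>P\<close> of \<open>K\<close>.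
\<close>

lemma ktrace_sandwich_nonzero:
  assumes v0: "v0 \<in> W" "P (a * v0) \<noteq> 0"
  shows "\<exists>x y. ktrace (x * a * y) \<noteq> 0"
proof -
  have "\<forall>i<kdim. (if i = 0 then v0 else 0) \<in> W"
    using v0 subspace_0[OF subspace_W] by auto
  then obtain es where es: "K_terms es" "\<forall>i<kdim. act es (kbasis i) = (if i = 0 then v0 else 0)"
    using density[OF kbasis(1), unfolded dense_on_def, rule_format,
        of "\<lambda>i. if i = 0 then v0 else 0"]
    by blast
  obtain x where x: "P (x * P (a * v0)) = kbasis 0"
    using P_transitive[OF P_in_W v0(2) kbasis_in_W[OF kdim_pos]] by blast
  let ?es = "map (\<lambda>(y, l). (x * a * y, l)) es"
  have act_es: "act ?es w = P (x * P (a * act es w))" for w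
    using act_map_mult[OF es(1), of "x * a" w] P_action[OF act_in_W, of x a es w] by simp
  have "(\<Sum>(y, l)\<leftarrow>es. l \<circ> ktrace (x * a * y)) = (\<Sum>j<kdim. kcoord (act ?es (kbasis j)) j)"
    using ktrace_act[OF es(1), of "x * a"] by simp
  also have "\<dots> = (\<Sum>j<kdim. if j = 0 then P else 0)"
    using es(2) x by (intro sum.cong refl) (auto simp: act_es P_0 kcoord_kbasis kdim_pos kcoord_0)
  also have "\<dots> = P"
    using kdim_pos by simp
  finally have "(\<Sum>(y, l)\<leftarrow>es. l \<circ> ktrace (x * a * y)) \<noteq> 0"
    using P_nonzero by simp
  then show ?thesis
    using K_terms_sum_nonzero[OF es(1), of "\<lambda>y. ktrace (x * a * y)"] by blast
qed

lemma trace_form_ex: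
  assumes v0: "v0 \<in> W" "P (a * v0) \<noteq> 0"
  shows "\<exists>\<theta>. trace_form \<theta> \<and> (\<forall>n. (\<forall>w\<in>W. P (n * w) = 0) \<longrightarrow> \<theta> n = 0) \<and>
    (\<exists>x y. \<theta> (x * a * y) \<noteq> 0)"
proof -
  obtain x y where "ktrace (x * a * y) \<noteq> 0"
    using ktrace_sandwich_nonzero[OF v0] by blast
  then obtain p where p: "ktrace (x * a * y) p \<noteq> 0"
    by (auto simp: fun_eq_iff)
  obtain g where g: "\<forall>x y. g (x + y) = g x + g y" "\<forall>c x. g (scale c x) = c * g x"
    "g (ktrace (x * a * y) p) = 1"
    using nonzero_functional_ex[OF p] by blast
  have g0: "g 0 = 0"
    using g(2)[rule_format, of 0 0] by simp
  define \<theta> where "\<theta> z = g (ktrace z p)" for z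
  have "\<theta> (u + v) = \<theta> u + \<theta> v" for u v
    unfolding \<theta>_def by (simp add: ktrace_add g(1))
  moreover have "\<theta> (scale c u) = c * \<theta> u" for c u
    unfolding \<theta>_def by (simp add: ktrace_scale P_id[OF K_in_W[OF ktrace_in_K]] g(2))
  moreover have "\<theta> (u * v) = \<theta> (v * u)" for u v
    unfolding \<theta>_def by (simp only: ktrace_commute[of u v])
  ultimately have "trace_form \<theta>"
    unfolding trace_form_def by blast
  moreover have "\<theta> n = 0" if "\<forall>w\<in>W. P (n * w) = 0" for n
    unfolding \<theta>_def using ktrace_annihilated that g0 by simp
  moreover have "\<theta> (x * a * y) \<noteq> 0"
    unfolding \<theta>_def using g(3) by simp
  ultimately show ?thesis
    by blast
qed

end

context assoc_algebra begin

lemma left_ideal_add_cyclic: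
  assumes Y: "left_ideal Y"
  shows "left_ideal {y + b * u | y b. y \<in> Y}"
proof -
  have sY: "subspace Y"
    using Y by (rule left_ideal_subspace)
  show ?thesis
    unfolding left_ideal_def subspace_def
  proof (intro conjI allI impI ballI)
    show "0 \<in> {y + b * u | y b. y \<in> Y}"
      using subspace_0[OF sY] by (intro CollectI exI[of _ 0]) auto
  next
    fix p q assume "p \<in> {y + b * u | y b. y \<in> Y}" "q \<in> {y + b * u | y b. y \<in> Y}"
    then obtain y1 b1 y2 b2 where "p = y1 + b1 * u" "q = y2 + b2 * u" "y1 \<in> Y" "y2 \<in> Y"
      by blast
    then show "p + q \<in> {y + b * u | y b. y \<in> Y}"
      by (intro CollectI exI[of _ "y1 + y2"] exI[of _ "b1 + b2"])
        (auto simp: subspace_add[OF sY] algebra_simps)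
  next
    fix c p assume "p \<in> {y + b * u | y b. y \<in> Y}"
    then obtain y1 b1 where "p = y1 + b1 * u" "y1 \<in> Y"
      by blast
    then show "scale c p \<in> {y + b * u | y b. y \<in> Y}"
      by (intro CollectI exI[of _ "scale c y1"] exI[of _ "scale c b1"])
        (auto simp: subspace_scale[OF sY] scale_right_distrib scale_mult_left)
  next
    fix d p assume "p \<in> {y + b * u | y b. y \<in> Y}"
    then obtain y1 b1 where "p = y1 + b1 * u" "y1 \<in> Y"
      by blast
    then show "d * p \<in> {y + b * u | y b. y \<in> Y}"
      by (intro CollectI exI[of _ "d * y1"] exI[of _ "d * b1"])
        (auto simp: left_ideal_mult[OF Y] distrib_left mult.assoc)
  qed
qed

lemma simple_quotient_cyclic:
  assumes XY: "simple_quotient X Y" and u: "u \<in> X" "u \<notin> Y" and w: "w \<in> X"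
  shows "\<exists>y b. y \<in> Y \<and> w = y + b * u"
proof -
  define Z where "Z = {y + b * u | y b. y \<in> Y}"
  have X: "left_ideal X" and Y: "left_ideal Y" "Y \<subseteq> X"
    using XY unfolding simple_quotient_def by blast+
  have "left_ideal Z"
    unfolding Z_def using left_ideal_add_cyclic[OF Y(1)] .
  moreover have "Y \<subseteq> Z"
    unfolding Z_def by (force intro: exI[of _ 0])
  moreover have "Z \<subseteq> X"
    unfolding Z_def using Y(2) left_ideal_mult[OF X u(1)] left_ideal_subspace[OF X] subspace_add
    by blast
  moreover have "u \<in> Z"
    unfolding Z_def using left_ideal_subspace[OF Y(1)] subspace_0 by (force intro: exI[of _ 1])
  ultimately have "Z = X"
    using XY u(2) unfolding simple_quotient_def by blast
  with w show ?thesis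
    unfolding Z_def by blast
qed

definition complement_projection :: "'a set \<Rightarrow> 'a set \<Rightarrow> ('a \<Rightarrow> 'a) \<Rightarrow> 'a set \<Rightarrow> bool" where
  "complement_projection X Y P W \<longleftrightarrow> lin P \<and> (\<forall>x. P x \<in> W) \<and> (\<forall>w\<in>W. P w = w) \<and> W \<subseteq> X \<and>
     (\<forall>y\<in>Y. P y = 0) \<and> (\<forall>x\<in>X. x - P x \<in> Y)"

lemma basis_projection_ex:
  assumes BX: "independent BX" and "BY \<subseteq> BX"
  shows "\<exists>P. lin P \<and> (\<forall>x. P x \<in> span (BX - BY)) \<and> (\<forall>w\<in>span (BX - BY). P w = w) \<and>
    (\<forall>y\<in>span BY. P y = 0)"
proof -
  define f where "f b = (if b \<in> BY then 0 else b)" for b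
  define P where "P = endo.construct BX f"
  have P: "lin P"
    unfolding P_def by (rule endo.linear_construct[OF BX])
  have P_basis: "b \<in> BX \<Longrightarrow> P b = f b" for b
    unfolding P_def by (rule endo.construct_basis[OF BX])
  have "f ` BX \<subseteq> insert 0 (BX - BY)"
    unfolding f_def by auto
  then have "P x \<in> span (BX - BY)" for x
    unfolding P_def using endo.construct_in_span[OF BX] by (metis span_insert_0 span_mono subsetD)
  moreover have "P w = w" if "w \<in> span (BX - BY)" for w
    using endo.linear_eq_on[OF P linear_id, of w "BX - BY"] that P_basis
    unfolding f_def by (auto simp: id_def)
  moreover have "P y = 0" if "y \<in> span BY" for y
  proof -
    have "P b = 0" if "b \<in> BY" for b
      using that P_basis \<open>BY \<subseteq> BX\<close> unfolding f_def by auto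
    then show ?thesis
      using endo.linear_eq_on[OF P endo.module_hom_zero, of y BY] \<open>y \<in> span BY\<close> by auto
  qed
  ultimately show ?thesis
    using P by blast
qed

lemma complement_projection_ex:
  assumes Y: "subspace Y" and X: "subspace X" and YX: "Y \<subseteq> X"
  shows "\<exists>P W. complement_projection X Y P W"
proof -
  obtain BY where BY: "BY \<subseteq> Y" "independent BY" "Y \<subseteq> span BY"
    using maximal_independent_subset[of Y] by blast
  obtain BX where BX: "BY \<subseteq> BX" "BX \<subseteq> X" "independent BX" "X \<subseteq> span BX"
    using maximal_independent_subset_extend[of BY X] BY YX by blast
  obtain P where P: "lin P" "\<forall>x. P x \<in> span (BX - BY)" "\<forall>w\<in>span (BX - BY). P w = w"
    and P_0: "\<forall>y\<in>span BY. P y = 0"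
    using basis_projection_ex[OF BX(3,1)] by blast
  have "span (BX - BY) \<subseteq> X"
    using BX(2) X by (metis Diff_subset span_minimal subset_trans)
  moreover have "x - P x \<in> Y" if "x \<in> X" for x
  proof -
    have "x \<in> span (BY \<union> (BX - BY))"
      using that BX(1,4) by (metis Un_Diff_cancel sup.absorb2 subsetD)
    then obtain y w where yw: "x = y + w" "y \<in> span BY" "w \<in> span (BX - BY)"
      unfolding span_Un by blast
    then have "P x = w"
      using endo.linear_add[OF P(1)] P_0 P(3) by simp
    moreover have "span BY \<subseteq> Y"
      using BY(1) Y by (rule span_minimal)
    ultimately show ?thesis
      using yw by auto
  qed
  ultimately have "complement_projection X Y P (span (BX - BY))"
    unfolding complement_projection_def using P P_0 BY(3) by blast
  then show ?thesis
    by blast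
qed

lemma complement_projection_action:
  assumes X: "left_ideal X" and Y: "left_ideal Y" and P: "complement_projection X Y P W"
    and w: "w \<in> W"
  shows "P (a * P (b * w)) = P (a * b * w)"
proof -
  have "b * w - P (b * w) \<in> Y"
    using w P left_ideal_mult[OF X] unfolding complement_projection_def by blast
  then have "P (a * (b * w - P (b * w))) = 0"
    using P left_ideal_mult[OF Y] unfolding complement_projection_def by blast
  then show ?thesis
    using P unfolding complement_projection_def
    by (simp add: right_diff_distrib endo.linear_diff mult.assoc)
qed

lemma complement_projection_transitive:
  assumes XY: "simple_quotient X Y" and P: "complement_projection X Y P W"
    and u: "u \<in> W" "u \<noteq> 0" and w: "w \<in> W"
  shows "\<exists>a. P (a * u) = w"
proof -
  have P_id: "\<forall>w\<in>W. P w = w" and P_Y: "\<forall>y\<in>Y. P y = 0" and "W \<subseteq> X" and lin_P: "lin P"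
    using P unfolding complement_projection_def by blast+
  then have "u \<notin> Y"
    using u by auto
  then obtain y b where "y \<in> Y" "w = y + b * u"
    using simple_quotient_cyclic[OF XY] u w \<open>W \<subseteq> X\<close> by blast
  then have "P (b * u) = w"
    using w P_id P_Y endo.linear_add[OF lin_P] by (metis add_0)
  then show ?thesis
    by blast
qed

lemma simple_quotient_irreducible_rep:
  assumes fin: "fin_dim_alg scale" and XY: "simple_quotient X Y"
    and P: "complement_projection X Y P W"
  shows "irreducible_rep scale P W"
proof -
  have X: "left_ideal X" and Y: "left_ideal Y" "Y \<subset> X"
    using XY unfolding simple_quotient_def by blast+
  have "W \<noteq> {0}"
  proof
    assume "W = {0}"
    obtain x where "x \<in> X" "x \<notin> Y"
      using Y(2) by blast
    with \<open>W = {0}\<close> P show False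
      unfolding complement_projection_def by force
  qed
  then show ?thesis
    unfolding irreducible_rep_def irreducible_rep_axioms_def
    using assoc_algebra_axioms fin P complement_projection_action[OF X Y(1) P]
      complement_projection_transitive[OF XY P]
    unfolding complement_projection_def by blast
qed

lemma trace_form_detects_simple_quotient:
  assumes fin: "fin_dim_alg scale" and XY: "simple_quotient X Y" and a: "a \<notin> annihilator X Y"
  shows "\<exists>\<theta>. trace_form \<theta> \<and> (\<forall>n\<in>annihilator X Y. \<theta> n = 0) \<and> (\<exists>x y. \<theta> (x * a * y) \<noteq> 0)"
proof -
  have X: "left_ideal X" and Y: "left_ideal Y" "Y \<subseteq> X"
    using XY unfolding simple_quotient_def by blast+
  obtain P W where P: "complement_projection X Y P W"
    using complement_projection_ex[OF left_ideal_subspace[OF Y(1)] left_ideal_subspace[OF X] Y(2)]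
    by blast
  then have W: "W \<subseteq> X" and P_Y: "\<forall>y\<in>Y. P y = 0" and P_X: "\<forall>x\<in>X. x - P x \<in> Y"
    unfolding complement_projection_def by blast+
  interpret rep: irreducible_rep scale P W
    using simple_quotient_irreducible_rep[OF fin XY P] .
  obtain x0 where x0: "x0 \<in> X" "a * x0 \<notin> Y"
    using a unfolding annihilator_def by blast
  have "P (a * P x0) \<noteq> 0"
  proof
    assume "P (a * P x0) = 0"
    moreover have "a * P x0 \<in> X"
      using rep.P_in_W W left_ideal_mult[OF X] by blast
    ultimately have "a * P x0 \<in> Y"
      using P_X by fastforce
    moreover have "a * (x0 - P x0) \<in> Y"
      using P_X x0(1) left_ideal_mult[OF Y(1)] by blast
    ultimately have "a * (x0 - P x0) + a * P x0 \<in> Y"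
      using left_ideal_subspace[OF Y(1)] subspace_add by blast
    with x0(2) show False
      by (simp add: algebra_simps)
  qed
  then obtain \<theta> where "trace_form \<theta>" "\<forall>n. (\<forall>w\<in>W. P (n * w) = 0) \<longrightarrow> \<theta> n = 0"
    "\<exists>x y. \<theta> (x * a * y) \<noteq> 0"
    using rep.trace_form_ex[OF rep.P_in_W] by blast
  moreover have "\<forall>w\<in>W. P (n * w) = 0" if "n \<in> annihilator X Y" for n
    using that W P_Y unfolding annihilator_def by blast
  ultimately show ?thesis
    by blast
qed

lemma annihilator_criterion:
  assumes fin: "fin_dim_alg scale" and char2: "(2::'f) \<noteq> 0" and XY: "simple_quotient X Y"
    and squares: "\<forall>s. \<exists>c n. c \<in> comm_span scale \<and> n \<in> annihilator X Y \<and> s\<^sup>2 * b = c + n"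
  shows "b \<in> annihilator X Y"
proof (rule ccontr)
  assume "b \<notin> annihilator X Y"
  then obtain \<theta> x y where \<theta>: "trace_form \<theta>" "\<forall>n\<in>annihilator X Y. \<theta> n = 0"
    and xy: "\<theta> (x * b * y) \<noteq> 0"
    using trace_form_detects_simple_quotient[OF fin XY] by blast
  define S where "S = {c + n | c n. c \<in> comm_span scale \<and> n \<in> annihilator X Y}"
  have ann: "alg_ideal scale (annihilator X Y)"
    using XY alg_ideal_annihilator unfolding simple_quotient_def by blast
  then have "subspace S"
    unfolding S_def alg_ideal_def by (intro subspace_sums subspace_comm_span) auto
  moreover have "comm_span scale \<subseteq> S"
  proof
    fix c assume "c \<in> comm_span scale"
    moreover have "0 \<in> annihilator X Y"
      using ann subspace_0 unfolding alg_ideal_def by blast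
    ultimately show "c \<in> S"
      unfolding S_def by force
  qed
  moreover have "\<forall>s. s\<^sup>2 * b \<in> S"
    using squares unfolding S_def by blast
  ultimately have "x * b * y \<in> S"
    by (rule sandwich_in_subspace[OF _ _ char2])
  then obtain c n where "c \<in> comm_span scale" "n \<in> annihilator X Y" "x * b * y = c + n"
    unfolding S_def by blast
  then have "\<theta> (x * b * y) = 0"
    using \<theta> trace_form_comm_span unfolding trace_form_def by simp
  with xy show False
    by contradiction
qed

end

context assoc_algebra begin

lemma kernel_subset_Jrad:
  assumes fin: "fin_dim_alg scale" and char2: "(2::'f) \<noteq> 0"
    and polar: "\<forall>x y. (T x)\<^sup>2 * T y - x\<^sup>2 * y \<in> comm_span scale" and "T a = 0"
  shows "a \<in> Jrad"
  unfolding Jrad_def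
proof (intro InterI, clarify)
  fix X Y assume XY: "simple_quotient X Y"
  have "0 \<in> annihilator X Y"
    using XY unfolding simple_quotient_def annihilator_def
    by (simp add: left_ideal_subspace subspace_0)
  moreover have "s\<^sup>2 * a \<in> comm_span scale" for s
  proof -
    have "- (s\<^sup>2 * a) \<in> comm_span scale"
      using polar[rule_format, of s a] \<open>T a = 0\<close> by simp
    then show ?thesis
      using subspace_neg[OF subspace_comm_span] by fastforce
  qed
  ultimately have "\<exists>c n. c \<in> comm_span scale \<and> n \<in> annihilator X Y \<and> s\<^sup>2 * a = c + n" for s
    by (intro exI[of _ "s\<^sup>2 * a"] exI[of _ 0]) simp
  then show "a \<in> annihilator X Y"
    using annihilator_criterion[OF fin char2 XY] by blast
qed

lemma maximal_ideal_annihilator: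
  assumes fin: "fin_dim_alg scale" and M: "maximal_alg_ideal scale M"
  shows "\<exists>N. simple_quotient UNIV N \<and> annihilator UNIV N = M"
proof -
  have M_ideal: "alg_ideal scale M" and "M \<noteq> UNIV"
    and M_max: "\<And>J. alg_ideal scale J \<Longrightarrow> M \<subseteq> J \<Longrightarrow> J = M \<or> J = UNIV"
    using M unfolding maximal_alg_ideal_def by blast+
  then have "M \<subset> UNIV"
    by blast
  then obtain N where "M \<subseteq> N" and N: "simple_quotient UNIV N"
    using simple_quotient_between[OF fin left_ideal_UNIV alg_ideal_imp_left_ideal[OF M_ideal]]
    by blast
  then have "left_ideal N"
    unfolding simple_quotient_def by blast
  then have "alg_ideal scale (annihilator UNIV N)"
    by (rule alg_ideal_annihilator[OF left_ideal_UNIV])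
  moreover have "M \<subseteq> annihilator UNIV N"
  proof
    fix m assume "m \<in> M"
    then have "m * x \<in> M" for x
      using M_ideal unfolding alg_ideal_def by blast
    with \<open>M \<subseteq> N\<close> show "m \<in> annihilator UNIV N"
      unfolding annihilator_def by blast
  qed
  moreover have "annihilator UNIV N \<noteq> UNIV"
  proof
    assume "annihilator UNIV N = UNIV"
    then have "1 \<in> annihilator UNIV N"
      by simp
    then have "N = UNIV"
      unfolding annihilator_def by auto
    with N show False
      unfolding simple_quotient_def by blast
  qed
  ultimately have "annihilator UNIV N = M"
    using M_max by blast
  with N show ?thesis
    by blast
qed

lemma maximal_ideal_invariant:
  assumes fin: "fin_dim_alg scale" and char2: "(2::'f) \<noteq> 0"
    and polar: "\<forall>x y. (T x)\<^sup>2 * T y - x\<^sup>2 * y \<in> comm_span scale" and "surj T"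
    and M: "maximal_alg_ideal scale M"
  shows "T ` M \<subseteq> M"
proof
  fix t assume "t \<in> T ` M"
  then obtain m where m: "m \<in> M" "t = T m"
    by blast
  obtain N where N: "simple_quotient UNIV N" and M_eq: "annihilator UNIV N = M"
    using maximal_ideal_annihilator[OF fin M] by blast
  have "\<exists>c n. c \<in> comm_span scale \<and> n \<in> M \<and> s\<^sup>2 * T m = c + n" for s
  proof -
    obtain u where "s = T u"
      using \<open>surj T\<close> by (metis surjD)
    moreover have "u\<^sup>2 * m \<in> M"
      using M m(1) unfolding maximal_alg_ideal_def alg_ideal_def by blast
    ultimately show ?thesis
      using polar by (intro exI[of _ "(T u)\<^sup>2 * T m - u\<^sup>2 * m"] exI[of _ "u\<^sup>2 * m"]) auto
  qed
  then have "T m \<in> annihilator UNIV N"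
    using annihilator_criterion[OF fin char2 N] M_eq by blast
  with m(2) M_eq show "t \<in> M"
    by simp
qed

end

theorem lemma3p2:
  fixes scale :: "'f::field \<Rightarrow> 'a::ring_1 \<Rightarrow> 'a"
    and T :: "'a \<Rightarrow> 'a"
  assumes alg: "algebra_over scale"
    and char2: "(2::'f) \<noteq> 0" and char3: "(3::'f) \<noteq> 0"
    and lin: "Vector_Spaces.linear scale scale T"
    and cube: "\<forall>x. T x ^ 3 - x ^ 3 \<in> comm_span scale"
  shows "(\<forall>x y. T x ^ 2 * T y - x ^ 2 * y \<in> comm_span scale)
    \<and> ((fin_dim_alg scale \<and> {x. T x = 0} \<inter> alg_rad scale = {0}) \<longrightarrow>
        (bij T \<and> (\<forall>M. maximal_alg_ideal scale M \<longrightarrow> T ` M \<subseteq> M)))"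
proof -
  interpret assoc_algebra scale
    by (rule assoc_algebra.intro) (fact alg)
  have polar: "\<forall>x y. (T x)\<^sup>2 * T y - x\<^sup>2 * y \<in> comm_span scale"
    using polarized_cube_in_comm_span[OF char2 char3 lin cube] by blast
  moreover have "bij T \<and> (\<forall>M. maximal_alg_ideal scale M \<longrightarrow> T ` M \<subseteq> M)"
    if fin: "fin_dim_alg scale" and kernel: "{x. T x = 0} \<inter> alg_rad scale = {0}"
  proof -
    have "inj T"
      using kernel_subset_Jrad[OF fin char2 polar] kernel alg_rad_eq_Jrad[OF fin]
      by (auto simp: endo.linear_inj_iff_eq_0[OF lin])
    moreover obtain B where "finite_dimensional_vector_space scale B"
      using finite_dimensional_vector_space_ex[OF fin] ..
    then have "surj T"
      using finite_dimensional_vector_space.linear_inj_imp_surj[OF _ lin \<open>inj T\<close>] by blast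
    ultimately show ?thesis
      using maximal_ideal_invariant[OF fin char2 polar] by (auto intro: bijI)
  qed
  ultimately show ?thesis
    by blast
qed

end
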